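(* Let $n\ge 3$ be an odd integer and $(\mathcal{C},\Sigma)$ an $n$-angulated category. For objects $A,B$ of $\mathcal{C}$ the following are equivalent: (1) $[A]=[B]$ in $K_0(\mathcal{C})$; (2) there exist objects $C_1,\dots,C_n$ and two $n$-angles $A\oplus C_1\xrightarrow{\alpha_1}C_2\xrightarrow{\alpha_2}\cdots\xrightarrow{\alpha_{n-1}}C_n\xrightarrow{\alpha_n}\Sigma A\oplus\Sigma C_1$ and $B\oplus C_1\xrightarrow{\beta_1}C_2\xrightarrow{\beta_2}\cdots\xrightarrow{\beta_{n-1}}C_n\xrightarrow{\beta_n}\Sigma B\oplus\Sigma C_1$ in $\mathcal{C}$.
   Context: All categories are small. Fix an integer $n\ge 3$. Let $\mathcal{C}$ be an additive category with an automorphism $\Sigma$. An $n$-$\Sigma$-sequence in $\mathcal{C}$ is a diagram $A_1\xrightarrow{\alpha_1}A_2\xrightarrow{\alpha_2}\cdots\xrightarrow{\alpha_{n-1}}A_n\xrightarrow{\alpha_n}\Sigma A_1$. Its left rotation is $A_2\xrightarrow{\alpha_2}\cdots\xrightarrow{\alpha_n}\Sigma A_1\xrightarrow{(-1)^n\Sigma\alpha_1}\Sigma A_2$. A morphism from $(A_\bullet,\alpha)$ to $(B_\bullet,\beta)$ is a tuple $(\varphi_1,\dots,\varphi_n)$, $\varphi_i:A_i\to B_i$, with $\beta_i\varphi_i=\varphi_{i+1}\alpha_i$ for $1\le i\le n-1$ and $\beta_n\varphi_n=(\Sigma\varphi_1)\alpha_n$; it is an isomorphism if all $\varphi_i$ are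 isomorphisms. Direct sums of sequences are taken termwise. $(\mathcal{C},\Sigma)$ is $n$-angulated if it is equipped with a collection $\mathscr N$ of $n$-$\Sigma$-sequences, called $n$-angles, such that: (N1)(a) $\mathscr N$ is closed under direct sums, direct summands and isomorphisms of $n$-$\Sigma$-sequences; (b) for every object $A$, the trivial sequence $A\xrightarrow{1}A\to0\to\cdots\to0\to\Sigma A$ is in $\mathscr N$; (c) every morphism $A_1\to A_2$ is the first morphism of some $n$-angle; (N2) an $n$-$\Sigma$-sequence is in $\mathscr N$ iff its left rotation is; (N3) given $n$-angles $(A_\bullet,\alpha),(B_\bullet,\beta)$ and $\varphi_1:A_1\to B_1$, $\varphi_2:A_2\to B_2$ with $\beta_1\varphi_1=\varphi_2\alpha_1$, there exist $\varphi_3,\dots,\varphi_n$ making $(\varphi_1,\dots,\varphi_n)$ a morphism; (N4) in (N3) the $\varphi_i$ can be chosen so that the mapping cone $A_2\oplus B_1\to A_3\oplus B_2\to\cdots\to\Sigma A_1\oplus B_n\to\Sigma A_2\oplus\Sigma B_1$, with maps $\left[\begin{smallmatrix}-\alpha_{i+1}&0\\ \varphi_{i+1}&\beta_i\end{smallmatrix}\right]$ ($1\le i\le n-1$) and last map $\left[\begin{smallmatrix}-\Sigma\alpha_1&0\\ \Sigma\varphi_1&\beta_n\end{smallmatrix}\right]$, is an $n$-angle. Grothendieck group: let $F(\mathcal{C})$ be the free abelian group on the isomorphism classes $\langle A\rangle$ of objects of $\mathcal{C}$. For an $n$-angle $A_\bullet$ put $\chi(A_\bullet)=\sum_{i=1}^n(-1)^{i+1}\langle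 A_i\rangle$. Let $R(\mathcal{C})$ be the subgroup generated by all $\chi(A_\bullet)$ ($A_\bullet$ an $n$-angle), together with $\langle 0\rangle$ when $n$ is even. Then $K_0(\mathcal{C})=F(\mathcal{C})/R(\mathcal{C})$, and $[A]$ denotes the class of $\langle A\rangle$. *)

theory Defs
  imports Main
begin

text \<open>A (small) category with explicit object and morphism sets; cmp g f is the
composite of f followed by g.  madd, mzero, mneg give the abelian group
structure on the Hom sets.\<close>

record ('o,'m) addcat =
  Obj   :: "'o set"
  Mor   :: "'m set"
  cdom  :: "'m \<Rightarrow> 'o"
  ccod  :: "'m \<Rightarrow> 'o"
  cmp   :: "'m \<Rightarrow> 'm \<Rightarrow> 'm"
  idm   :: "'o \<Rightarrow> 'm"
  madd  :: "'m \<Rightarrow> 'm \<Rightarrow> 'm"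
  mzero :: "'o \<Rightarrow> 'o \<Rightarrow> 'm"
  mneg  :: "'m \<Rightarrow> 'm"

definition Hom :: "('o,'m) addcat \<Rightarrow> 'o \<Rightarrow> 'o \<Rightarrow> 'm set" where
  "Hom C A B = {f \<in> Mor C. cdom C f = A \<and> ccod C f = B}"

type_synonym ('o,'m) bp = "'o \<times> 'm \<times> 'm \<times> 'm \<times> 'm"

definition is_biprod :: "('o,'m) addcat \<Rightarrow> 'o \<Rightarrow> 'o \<Rightarrow> ('o,'m) bp \<Rightarrow> bool" where
  "is_biprod C X Y D = (case D of (S, i1, i2, p1, p2) \<Rightarrow>
     X \<in> Obj C \<and> Y \<in> Obj C \<and> S \<in> Obj C \<and>
     i1 \<in> Hom C X S \<and> i2 \<in> Hom C Y S \<and> p1 \<in> Hom C S X \<and> p2 \<in> Hom C S Y \<and>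
     cmp C p1 i1 = idm C X \<and> cmp C p2 i2 = idm C Y \<and>
     cmp C p1 i2 = mzero C Y X \<and> cmp C p2 i1 = mzero C X Y \<and>
     madd C (cmp C i1 p1) (cmp C i2 p2) = idm C S)"

definition is_zero_obj :: "('o,'m) addcat \<Rightarrow> 'o \<Rightarrow> bool" where
  "is_zero_obj C Z = (Z \<in> Obj C \<and> idm C Z = mzero C Z Z)"

definition additive_category :: "('o,'m) addcat \<Rightarrow> bool" where
  "additive_category C = (
     (\<forall>f \<in> Mor C. cdom C f \<in> Obj C \<and> ccod C f \<in> Obj C) \<and>
     (\<forall>A \<in> Obj C. idm C A \<in> Hom C A A) \<and>
     (\<forall>A B D f g. f \<in> Hom C A B \<longrightarrow> g \<in> Hom C B D \<longrightarrow> cmp C g f \<in> Hom C A D) \<and>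
     (\<forall>A B D E f g h. f \<in> Hom C A B \<longrightarrow> g \<in> Hom C B D \<longrightarrow> h \<in> Hom C D E \<longrightarrow>
        cmp C h (cmp C g f) = cmp C (cmp C h g) f) \<and>
     (\<forall>A B f. f \<in> Hom C A B \<longrightarrow> cmp C f (idm C A) = f \<and> cmp C (idm C B) f = f) \<and>
     (\<forall>A \<in> Obj C. \<forall>B \<in> Obj C. mzero C A B \<in> Hom C A B) \<and>
     (\<forall>A B f g. f \<in> Hom C A B \<longrightarrow> g \<in> Hom C A B \<longrightarrow> madd C f g \<in> Hom C A B) \<and>
     (\<forall>A B f. f \<in> Hom C A B \<longrightarrow> mneg C f \<in> Hom C A B) \<and>
     (\<forall>A B f g h. f \<in> Hom C A B \<longrightarrow> g \<in> Hom C A B \<longrightarrow> h \<in> Hom C A B \<longrightarrow>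
        madd C (madd C f g) h = madd C f (madd C g h)) \<and>
     (\<forall>A B f g. f \<in> Hom C A B \<longrightarrow> g \<in> Hom C A B \<longrightarrow> madd C f g = madd C g f) \<and>
     (\<forall>A B f. f \<in> Hom C A B \<longrightarrow> madd C f (mzero C A B) = f) \<and>
     (\<forall>A B f. f \<in> Hom C A B \<longrightarrow> madd C f (mneg C f) = mzero C A B) \<and>
     (\<forall>A B D f f' g. f \<in> Hom C A B \<longrightarrow> f' \<in> Hom C A B \<longrightarrow> g \<in> Hom C B D \<longrightarrow>
        cmp C g (madd C f f') = madd C (cmp C g f) (cmp C g f')) \<and>
     (\<forall>A B D f g g'. f \<in> Hom C A B \<longrightarrow> g \<in> Hom C B D \<longrightarrow> g' \<in> Hom C B D \<longrightarrow>
        cmp C (madd C g g') f = madd C (cmp C g f) (cmp C g' f)) \<and>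
     (\<exists>Z. is_zero_obj C Z) \<and>
     (\<forall>X \<in> Obj C. \<forall>Y \<in> Obj C. \<exists>D. is_biprod C X Y D))"

definition is_automorphism :: "('o,'m) addcat \<Rightarrow> ('o \<Rightarrow> 'o) \<Rightarrow> ('m \<Rightarrow> 'm) \<Rightarrow> bool" where
  "is_automorphism C SO SM = (
     bij_betw SO (Obj C) (Obj C) \<and> bij_betw SM (Mor C) (Mor C) \<and>
     (\<forall>A B f. f \<in> Hom C A B \<longrightarrow> SM f \<in> Hom C (SO A) (SO B)) \<and>
     (\<forall>A B D f g. f \<in> Hom C A B \<longrightarrow> g \<in> Hom C B D \<longrightarrow> SM (cmp C g f) = cmp C (SM g) (SM f)) \<and>
     (\<forall>A \<in> Obj C. SM (idm C A) = idm C (SO A)) \<and>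
     (\<forall>A B f g. f \<in> Hom C A B \<longrightarrow> g \<in> Hom C A B \<longrightarrow> SM (madd C f g) = madd C (SM f) (SM g)))"

definition is_iso :: "('o,'m) addcat \<Rightarrow> 'm \<Rightarrow> bool" where
  "is_iso C f = (f \<in> Mor C \<and> (\<exists>g \<in> Hom C (ccod C f) (cdom C f).
     cmp C g f = idm C (cdom C f) \<and> cmp C f g = idm C (ccod C f)))"

definition iso_obj :: "('o,'m) addcat \<Rightarrow> 'o \<Rightarrow> 'o \<Rightarrow> bool" where
  "iso_obj C A B = (\<exists>f \<in> Hom C A B. is_iso C f)"

section \<open>n-Sigma-sequences (0-indexed lists: A_1..A_n is As!0..As!(n-1))\<close>

definition nseq :: "('o,'m) addcat \<Rightarrow> ('o \<Rightarrow> 'o) \<Rightarrow> nat \<Rightarrow> 'o list \<Rightarrow> 'm list \<Rightarrow> bool" where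
  "nseq C SO n As fs = (length As = n \<and> length fs = n \<and>
     (\<forall>i < n - 1. fs ! i \<in> Hom C (As ! i) (As ! Suc i)) \<and>
     fs ! (n - 1) \<in> Hom C (As ! (n - 1)) (SO (As ! 0)))"

definition rotl :: "('o,'m) addcat \<Rightarrow> ('o \<Rightarrow> 'o) \<Rightarrow> ('m \<Rightarrow> 'm) \<Rightarrow> nat
    \<Rightarrow> 'o list \<times> 'm list \<Rightarrow> 'o list \<times> 'm list" where
  "rotl C SO SM n X = (case X of (As, fs) \<Rightarrow>
     (tl As @ [SO (hd As)],
      tl fs @ [if even n then SM (hd fs) else mneg C (SM (hd fs))]))"

definition seq_mor :: "('o,'m) addcat \<Rightarrow> ('m \<Rightarrow> 'm) \<Rightarrow> nat
    \<Rightarrow> 'o list \<times> 'm list \<Rightarrow> 'o list \<times> 'm list \<Rightarrow> 'm list \<Rightarrow> bool" where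
  "seq_mor C SM n X Y ph = (case X of (As, fs) \<Rightarrow> case Y of (Bs, gs) \<Rightarrow>
     length ph = n \<and>
     (\<forall>i < n. ph ! i \<in> Hom C (As ! i) (Bs ! i)) \<and>
     (\<forall>i < n - 1. cmp C (gs ! i) (ph ! i) = cmp C (ph ! Suc i) (fs ! i)) \<and>
     cmp C (gs ! (n - 1)) (ph ! (n - 1)) = cmp C (SM (ph ! 0)) (fs ! (n - 1)))"

definition seq_iso :: "('o,'m) addcat \<Rightarrow> ('m \<Rightarrow> 'm) \<Rightarrow> nat
    \<Rightarrow> 'o list \<times> 'm list \<Rightarrow> 'o list \<times> 'm list \<Rightarrow> bool" where
  "seq_iso C SM n X Y = (\<exists>ph. seq_mor C SM n X Y ph \<and> (\<forall>i < n. is_iso C (ph ! i)))"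

definition seq_dsum :: "('o,'m) addcat \<Rightarrow> ('m \<Rightarrow> 'm) \<Rightarrow> nat
    \<Rightarrow> 'o list \<times> 'm list \<Rightarrow> 'o list \<times> 'm list \<Rightarrow> 'o list \<times> 'm list \<Rightarrow> bool" where
  "seq_dsum C SM n X Y Z = (\<exists>i1 i2 p1 p2.
     seq_mor C SM n X Z i1 \<and> seq_mor C SM n Y Z i2 \<and>
     seq_mor C SM n Z X p1 \<and> seq_mor C SM n Z Y p2 \<and>
     (\<forall>i < n. is_biprod C (fst X ! i) (fst Y ! i)
                (fst Z ! i, i1 ! i, i2 ! i, p1 ! i, p2 ! i)))"

definition triv_seq :: "('o,'m) addcat \<Rightarrow> ('o \<Rightarrow> 'o) \<Rightarrow> nat \<Rightarrow> 'o \<Rightarrow> 'o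
    \<Rightarrow> 'o list \<times> 'm list" where
  "triv_seq C SO n A Z =
     ([A, A] @ replicate (n - 2) Z,
      [idm C A, mzero C A Z] @ replicate (n - 3) (mzero C Z Z) @ [mzero C Z (SO A)])"

definition sig_bp :: "('o \<Rightarrow> 'o) \<Rightarrow> ('m \<Rightarrow> 'm) \<Rightarrow> ('o,'m) bp \<Rightarrow> ('o,'m) bp" where
  "sig_bp SO SM D = (case D of (S, i1, i2, p1, p2) \<Rightarrow> (SO S, SM i1, SM i2, SM p1, SM p2))"

text \<open>Matrix [[a,b],[c,d]] from the biproduct D to the biproduct E.\<close>
definition mat :: "('o,'m) addcat \<Rightarrow> ('o,'m) bp \<Rightarrow> ('o,'m) bp \<Rightarrow> 'm \<Rightarrow> 'm \<Rightarrow> 'm \<Rightarrow> 'm \<Rightarrow> 'm" where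
  "mat C D E a b c d = (case D of (S, i1, i2, p1, p2) \<Rightarrow> case E of (T, j1, j2, q1, q2) \<Rightarrow>
     madd C (madd C (cmp C j1 (cmp C a p1)) (cmp C j1 (cmp C b p2)))
            (madd C (cmp C j2 (cmp C c p1)) (cmp C j2 (cmp C d p2))))"

text \<open>Extended index: position j < n is the j-th entry, positions n, n+1 are
Sigma applied to entries 0, 1.\<close>
definition ext_obj :: "('o \<Rightarrow> 'o) \<Rightarrow> nat \<Rightarrow> 'o list \<Rightarrow> nat \<Rightarrow> 'o" where
  "ext_obj SO n As j = (if j < n then As ! j else SO (As ! (j - n)))"

definition ext_mor :: "('m \<Rightarrow> 'm) \<Rightarrow> nat \<Rightarrow> 'm list \<Rightarrow> nat \<Rightarrow> 'm" where
  "ext_mor SM n fs j = (if j < n then fs ! j else SM (fs ! (j - n)))"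

definition cone_bps :: "('o,'m) addcat \<Rightarrow> ('o \<Rightarrow> 'o) \<Rightarrow> nat \<Rightarrow> 'o list \<Rightarrow> 'o list
    \<Rightarrow> ('o,'m) bp list \<Rightarrow> bool" where
  "cone_bps C SO n As Bs bps = (length bps = n \<and>
     (\<forall>i < n. is_biprod C (ext_obj SO n As (Suc i)) (Bs ! i) (bps ! i)))"

definition cone :: "('o,'m) addcat \<Rightarrow> ('o \<Rightarrow> 'o) \<Rightarrow> ('m \<Rightarrow> 'm) \<Rightarrow> nat
    \<Rightarrow> 'o list \<times> 'm list \<Rightarrow> 'o list \<times> 'm list \<Rightarrow> 'm list \<Rightarrow> ('o,'m) bp list
    \<Rightarrow> 'o list \<times> 'm list" where
  "cone C SO SM n X Y ph bps = (case X of (As, fs) \<Rightarrow> case Y of (Bs, gs) \<Rightarrow>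
     (let D' = (\<lambda>j. if j < n then bps ! j else sig_bp SO SM (bps ! 0)) in
      (map fst bps,
       map (\<lambda>i. mat C (D' i) (D' (Suc i))
                   (mneg C (ext_mor SM n fs (Suc i)))
                   (mzero C (ext_obj SO n Bs i) (ext_obj SO n As (Suc (Suc i))))
                   (ext_mor SM n ph (Suc i))
                   (gs ! i)) [0..<n])))"

definition n_angulated :: "('o,'m) addcat \<Rightarrow> ('o \<Rightarrow> 'o) \<Rightarrow> ('m \<Rightarrow> 'm) \<Rightarrow> nat
    \<Rightarrow> ('o list \<times> 'm list) set \<Rightarrow> bool" where
  "n_angulated C SO SM n N = (
     3 \<le> n \<and> additive_category C \<and> is_automorphism C SO SM \<and>
     (\<forall>X \<in> N. nseq C SO n (fst X) (snd X)) \<and>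
     \<comment> \<open>N1(a)\<close>
     (\<forall>X Y Z. X \<in> N \<longrightarrow> Y \<in> N \<longrightarrow> nseq C SO n (fst Z) (snd Z) \<longrightarrow>
        seq_dsum C SM n X Y Z \<longrightarrow> Z \<in> N) \<and>
     (\<forall>X Y Z. Z \<in> N \<longrightarrow> nseq C SO n (fst X) (snd X) \<longrightarrow> nseq C SO n (fst Y) (snd Y) \<longrightarrow>
        seq_dsum C SM n X Y Z \<longrightarrow> X \<in> N \<and> Y \<in> N) \<and>
     (\<forall>X Y. X \<in> N \<longrightarrow> nseq C SO n (fst Y) (snd Y) \<longrightarrow> seq_iso C SM n X Y \<longrightarrow> Y \<in> N) \<and>
     \<comment> \<open>N1(b)\<close>
     (\<forall>A \<in> Obj C. \<forall>Z. is_zero_obj C Z \<longrightarrow> triv_seq C SO n A Z \<in> N) \<and>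
     \<comment> \<open>N1(c)\<close>
     (\<forall>A1 A2 f. f \<in> Hom C A1 A2 \<longrightarrow>
        (\<exists>As fs. (As, fs) \<in> N \<and> As ! 0 = A1 \<and> As ! 1 = A2 \<and> fs ! 0 = f)) \<and>
     \<comment> \<open>N2\<close>
     (\<forall>X. nseq C SO n (fst X) (snd X) \<longrightarrow> (X \<in> N \<longleftrightarrow> rotl C SO SM n X \<in> N)) \<and>
     \<comment> \<open>N3\<close>
     (\<forall>As fs Bs gs p1 p2. (As, fs) \<in> N \<longrightarrow> (Bs, gs) \<in> N \<longrightarrow>
        p1 \<in> Hom C (As ! 0) (Bs ! 0) \<longrightarrow> p2 \<in> Hom C (As ! 1) (Bs ! 1) \<longrightarrow>
        cmp C (gs ! 0) p1 = cmp C p2 (fs ! 0) \<longrightarrow>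
        (\<exists>ph. seq_mor C SM n (As, fs) (Bs, gs) ph \<and> ph ! 0 = p1 \<and> ph ! 1 = p2)) \<and>
     \<comment> \<open>N4\<close>
     (\<forall>As fs Bs gs p1 p2. (As, fs) \<in> N \<longrightarrow> (Bs, gs) \<in> N \<longrightarrow>
        p1 \<in> Hom C (As ! 0) (Bs ! 0) \<longrightarrow> p2 \<in> Hom C (As ! 1) (Bs ! 1) \<longrightarrow>
        cmp C (gs ! 0) p1 = cmp C p2 (fs ! 0) \<longrightarrow>
        (\<exists>ph. seq_mor C SM n (As, fs) (Bs, gs) ph \<and> ph ! 0 = p1 \<and> ph ! 1 = p2 \<and>
           (\<forall>bps. cone_bps C SO n As Bs bps \<longrightarrow>
              cone C SO SM n (As, fs) (Bs, gs) ph bps \<in> N))))"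

definition iso_class :: "('o,'m) addcat \<Rightarrow> 'o \<Rightarrow> 'o set" where
  "iso_class C A = {B \<in> Obj C. iso_obj C A B}"

text \<open>F(C) is realised inside the group of integer-valued functions on
isomorphism classes; gen C A is the basis element of the class of A.\<close>
definition gen :: "('o,'m) addcat \<Rightarrow> 'o \<Rightarrow> 'o set \<Rightarrow> int" where
  "gen C A = (\<lambda>S. if S = iso_class C A then 1 else 0)"

definition chi :: "('o,'m) addcat \<Rightarrow> nat \<Rightarrow> 'o list \<Rightarrow> 'o set \<Rightarrow> int" where
  "chi C n As = (\<lambda>S. \<Sum>i<n. (-1) ^ i * gen C (As ! i) S)"

inductive_set Rgen :: "('o,'m) addcat \<Rightarrow> nat \<Rightarrow> ('o list \<times> 'm list) set
    \<Rightarrow> ('o set \<Rightarrow> int) set"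
  for C n N where
  R_zero: "(\<lambda>S. 0) \<in> Rgen C n N"
| R_chi: "(As, fs) \<in> N \<Longrightarrow> chi C n As \<in> Rgen C n N"
| R_zobj: "even n \<Longrightarrow> is_zero_obj C Z \<Longrightarrow> gen C Z \<in> Rgen C n N"
| R_add: "x \<in> Rgen C n N \<Longrightarrow> y \<in> Rgen C n N \<Longrightarrow> (\<lambda>S. x S + y S) \<in> Rgen C n N"
| R_neg: "x \<in> Rgen C n N \<Longrightarrow> (\<lambda>S. - x S) \<in> Rgen C n N"

text \<open>The class [A] in K_0 = F/R, as the coset of the basis element.\<close>
definition K0class :: "('o,'m) addcat \<Rightarrow> nat \<Rightarrow> ('o list \<times> 'm list) set \<Rightarrow> 'o
    \<Rightarrow> ('o set \<Rightarrow> int) set" where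
  "K0class C n N A = {(\<lambda>S. gen C A S + r S) | r. r \<in> Rgen C n N}"

end

theory Submission
  imports Defs "HOL-Library.Multiset"
begin

text \<open>
  For odd n and a biproduct X \<oplus> Y, the n-angle X \<rightarrow> X \<oplus> Y \<rightarrow> Y \<rightarrow> 0 \<rightarrow> \<dots> \<rightarrow> 0 gives
  [X \<oplus> Y] = [X] + [Y], because its zero terms cancel in pairs. Two n-angles with the same terms
  C_2, \<dots>, C_n thus give [A] + [C_1] = [B] + [C_1].

  Conversely, call a tuple of finite multisets of objects realizable if some n-angle has at every
  position the direct sum of the corresponding multiset. Realizable tuples are closed under sums
  (direct sums of n-angles) and rotation, and contain every edge: a multiset Q at two adjacent
  positions. Two tuples are stably equivalent if they agree up to isomorphism after adding
  realizable tuples. Sliding objects along edges shows that every element of R(C) is a stable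
  equivalence between two multisets placed at position 0; for odd n the generator \<langle>0\<rangle> does not
  occur. Hence [A] = [B] gives realizable R, R' with A + R and B + R' isomorphic position by
  position. Adding the edge {A, B} at positions 0, 1 to both yields two n-angles whose first terms
  are A \<oplus> C_1 and B \<oplus> C_1 and whose other terms are isomorphic, and transporting along these
  isomorphisms makes the other terms equal.
\<close>


section \<open>Additive categories\<close>

locale additive_cat =
  fixes C :: "('o,'m) addcat"
  assumes additive: "additive_category C"
begin

lemma Hom_iff: "f \<in> Hom C A B \<longleftrightarrow> f \<in> Mor C \<and> cdom C f = A \<and> ccod C f = B"
  by (simp add: Hom_def)

lemma cdom_obj [simp]: "f \<in> Mor C \<Longrightarrow> cdom C f \<in> Obj C"
  using additive unfolding additive_category_def by (elim conjE) metis

lemma ccod_obj [simp]: "f \<in> Mor C \<Longrightarrow> ccod C f \<in> Obj C"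
  using additive unfolding additive_category_def by (elim conjE) metis

lemma idm_Hom: "A \<in> Obj C \<Longrightarrow> idm C A \<in> Hom C A A"
  using additive unfolding additive_category_def by (elim conjE) metis

lemma cmp_Hom: "f \<in> Hom C A B \<Longrightarrow> g \<in> Hom C B D \<Longrightarrow> cmp C g f \<in> Hom C A D"
  using additive unfolding additive_category_def by (elim conjE) metis

lemma cmp_assoc_Hom:
  "f \<in> Hom C A B \<Longrightarrow> g \<in> Hom C B D \<Longrightarrow> h \<in> Hom C D E \<Longrightarrow>
    cmp C (cmp C h g) f = cmp C h (cmp C g f)"
  using additive unfolding additive_category_def by (elim conjE) metis

lemma cmp_idm_Hom: "f \<in> Hom C A B \<Longrightarrow> cmp C f (idm C A) = f \<and> cmp C (idm C B) f = f"
  using additive unfolding additive_category_def by (elim conjE) metis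

lemma mzero_Hom: "A \<in> Obj C \<Longrightarrow> B \<in> Obj C \<Longrightarrow> mzero C A B \<in> Hom C A B"
  using additive unfolding additive_category_def by (elim conjE) metis

lemma madd_Hom: "f \<in> Hom C A B \<Longrightarrow> g \<in> Hom C A B \<Longrightarrow> madd C f g \<in> Hom C A B"
  using additive unfolding additive_category_def by (elim conjE) metis

lemma mneg_Hom: "f \<in> Hom C A B \<Longrightarrow> mneg C f \<in> Hom C A B"
  using additive unfolding additive_category_def by (elim conjE) metis

lemma madd_assoc_Hom:
  "f \<in> Hom C A B \<Longrightarrow> g \<in> Hom C A B \<Longrightarrow> h \<in> Hom C A B \<Longrightarrow>
    madd C (madd C f g) h = madd C f (madd C g h)"
  using additive unfolding additive_category_def by (elim conjE) metis

lemma madd_comm_Hom: "f \<in> Hom C A B \<Longrightarrow> g \<in> Hom C A B \<Longrightarrow> madd C f g = madd C g f"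
  using additive unfolding additive_category_def by (elim conjE) metis

lemma madd_mzero_Hom: "f \<in> Hom C A B \<Longrightarrow> madd C f (mzero C A B) = f"
  using additive unfolding additive_category_def by (elim conjE) metis

lemma madd_mneg_Hom: "f \<in> Hom C A B \<Longrightarrow> madd C f (mneg C f) = mzero C A B"
  using additive unfolding additive_category_def by (elim conjE) metis

lemma cmp_madd_left_Hom:
  "f \<in> Hom C A B \<Longrightarrow> f' \<in> Hom C A B \<Longrightarrow> g \<in> Hom C B D \<Longrightarrow>
    cmp C g (madd C f f') = madd C (cmp C g f) (cmp C g f')"
  using additive unfolding additive_category_def by (elim conjE) metis

lemma cmp_madd_right_Hom:
  "f \<in> Hom C A B \<Longrightarrow> g \<in> Hom C B D \<Longrightarrow> g' \<in> Hom C B D \<Longrightarrow>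
    cmp C (madd C g g') f = madd C (cmp C g f) (cmp C g' f)"
  using additive unfolding additive_category_def by (elim conjE) metis

lemma zero_obj_exists: "\<exists>Z. is_zero_obj C Z"
  using additive unfolding additive_category_def by (elim conjE) metis

lemma biprod_exists: "X \<in> Obj C \<Longrightarrow> Y \<in> Obj C \<Longrightarrow> \<exists>D. is_biprod C X Y D"
  using additive unfolding additive_category_def by (elim conjE) metis

lemma cmp_typ [simp]:
  assumes "f \<in> Mor C" "g \<in> Mor C" "ccod C f = cdom C g"
  shows "cmp C g f \<in> Mor C" "cdom C (cmp C g f) = cdom C f" "ccod C (cmp C g f) = ccod C g"
  using cmp_Hom[of f "cdom C f" "cdom C g" g "ccod C g"] assms by (auto simp: Hom_iff)

lemma idm_typ [simp]:
  assumes "A \<in> Obj C"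
  shows "idm C A \<in> Mor C" "cdom C (idm C A) = A" "ccod C (idm C A) = A"
  using idm_Hom[OF assms] by (auto simp: Hom_iff)

lemma mzero_typ [simp]:
  assumes "A \<in> Obj C" "B \<in> Obj C"
  shows "mzero C A B \<in> Mor C" "cdom C (mzero C A B) = A" "ccod C (mzero C A B) = B"
  using mzero_Hom[OF assms] by (auto simp: Hom_iff)

lemma madd_typ [simp]:
  assumes "f \<in> Mor C" "g \<in> Mor C" "cdom C f = cdom C g" "ccod C f = ccod C g"
  shows "madd C f g \<in> Mor C" "cdom C (madd C f g) = cdom C f" "ccod C (madd C f g) = ccod C f"
  using madd_Hom[of f "cdom C f" "ccod C f" g] assms by (auto simp: Hom_iff)

lemma mneg_typ [simp]:
  assumes "f \<in> Mor C"
  shows "mneg C f \<in> Mor C" "cdom C (mneg C f) = cdom C f" "ccod C (mneg C f) = ccod C f"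
  using mneg_Hom[of f "cdom C f" "ccod C f"] assms by (auto simp: Hom_iff)

lemma cmp_assoc:
  assumes "f \<in> Mor C" "g \<in> Mor C" "h \<in> Mor C" "ccod C f = cdom C g" "ccod C g = cdom C h"
  shows "cmp C (cmp C h g) f = cmp C h (cmp C g f)"
  using cmp_assoc_Hom[of f _ "cdom C g" g "cdom C h" h] assms by (auto simp: Hom_iff)

lemma cmp_idm_right [simp]: "f \<in> Mor C \<Longrightarrow> A = cdom C f \<Longrightarrow> cmp C f (idm C A) = f"
  and cmp_idm_left [simp]: "f \<in> Mor C \<Longrightarrow> B = ccod C f \<Longrightarrow> cmp C (idm C B) f = f"
  using cmp_idm_Hom[of f "cdom C f" "ccod C f"] by (auto simp: Hom_iff)

lemma madd_assoc:
  assumes "f \<in> Mor C" "g \<in> Mor C" "h \<in> Mor C" "cdom C f = cdom C g" "ccod C f = ccod C g"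
    "cdom C f = cdom C h" "ccod C f = ccod C h"
  shows "madd C (madd C f g) h = madd C f (madd C g h)"
  using madd_assoc_Hom[of f "cdom C f" "ccod C f" g h] assms by (auto simp: Hom_iff)

lemma madd_comm:
  assumes "f \<in> Mor C" "g \<in> Mor C" "cdom C f = cdom C g" "ccod C f = ccod C g"
  shows "madd C f g = madd C g f"
  using madd_comm_Hom[of f "cdom C f" "ccod C f" g] assms by (auto simp: Hom_iff)

lemma madd_mzero_right [simp]:
  "f \<in> Mor C \<Longrightarrow> A = cdom C f \<Longrightarrow> B = ccod C f \<Longrightarrow> madd C f (mzero C A B) = f"
  using madd_mzero_Hom[of f A B] by (auto simp: Hom_iff)

lemma madd_mzero_left [simp]:
  "f \<in> Mor C \<Longrightarrow> A = cdom C f \<Longrightarrow> B = ccod C f \<Longrightarrow> madd C (mzero C A B) f = f"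
  using madd_comm[of "mzero C A B" f] by simp

lemma madd_mneg: "f \<in> Mor C \<Longrightarrow> madd C f (mneg C f) = mzero C (cdom C f) (ccod C f)"
  using madd_mneg_Hom[of f] by (auto simp: Hom_iff)

lemma cmp_madd_left:
  assumes "f \<in> Mor C" "g \<in> Mor C" "h \<in> Mor C" "cdom C f = cdom C g" "ccod C f = ccod C g"
    "ccod C f = cdom C h"
  shows "cmp C h (madd C f g) = madd C (cmp C h f) (cmp C h g)"
  using cmp_madd_left_Hom[of f "cdom C f" "ccod C f" g h] assms by (auto simp: Hom_iff)

lemma cmp_madd_right:
  assumes "f \<in> Mor C" "g \<in> Mor C" "h \<in> Mor C" "cdom C f = cdom C g" "ccod C f = ccod C g"
    "cdom C f = ccod C h"
  shows "cmp C (madd C f g) h = madd C (cmp C f h) (cmp C g h)"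
  using cmp_madd_right_Hom[of h "cdom C h" "cdom C f" f "ccod C f" g] assms by (auto simp: Hom_iff)

lemma madd_idem_eq_mzero:
  assumes "x \<in> Mor C" "madd C x x = x"
  shows "x = mzero C (cdom C x) (ccod C x)"
proof -
  have "x = madd C x (madd C x (mneg C x))" using assms by (simp add: madd_mneg)
  also have "\<dots> = madd C (madd C x x) (mneg C x)" by (rule madd_assoc[symmetric]) (simp_all add: assms)
  also have "\<dots> = mzero C (cdom C x) (ccod C x)" by (simp add: assms madd_mneg)
  finally show ?thesis .
qed

lemma cmp_mzero_right [simp]:
  assumes "g \<in> Mor C" "B = cdom C g" "A \<in> Obj C"
  shows "cmp C g (mzero C A B) = mzero C A (ccod C g)"
proof -
  have "madd C (cmp C g (mzero C A B)) (cmp C g (mzero C A B)) = cmp C g (mzero C A B)"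
    using assms by (simp add: cmp_madd_left[symmetric])
  from madd_idem_eq_mzero[OF _ this] assms show ?thesis by simp
qed

lemma cmp_mzero_left [simp]:
  assumes "f \<in> Mor C" "B = ccod C f" "D \<in> Obj C"
  shows "cmp C (mzero C B D) f = mzero C (cdom C f) D"
proof -
  have "madd C (cmp C (mzero C B D) f) (cmp C (mzero C B D) f) = cmp C (mzero C B D) f"
    using assms by (simp add: cmp_madd_right[symmetric])
  from madd_idem_eq_mzero[OF _ this] assms show ?thesis by simp
qed

end

section \<open>Biproducts and isomorphic objects\<close>

context additive_cat
begin

lemma biprodD:
  assumes "is_biprod C X Y (S,i1,i2,p1,p2)"
  shows "X \<in> Obj C" "Y \<in> Obj C" "S \<in> Obj C"
    "i1 \<in> Mor C" "cdom C i1 = X" "ccod C i1 = S"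
    "i2 \<in> Mor C" "cdom C i2 = Y" "ccod C i2 = S"
    "p1 \<in> Mor C" "cdom C p1 = S" "ccod C p1 = X"
    "p2 \<in> Mor C" "cdom C p2 = S" "ccod C p2 = Y"
    "cmp C p1 i1 = idm C X" "cmp C p2 i2 = idm C Y"
    "cmp C p1 i2 = mzero C Y X" "cmp C p2 i1 = mzero C X Y"
    "madd C (cmp C i1 p1) (cmp C i2 p2) = idm C S"
  using assms unfolding is_biprod_def by (auto simp: Hom_iff)

lemma biprod_Obj: "is_biprod C X Y D \<Longrightarrow> fst D \<in> Obj C"
  by (cases D) (auto dest: biprodD)

lemma cmp_reassoc:
  assumes "cmp C g f = h" "f \<in> Mor C" "g \<in> Mor C" "x \<in> Mor C" "ccod C x = cdom C f"
    "ccod C f = cdom C g"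
  shows "cmp C g (cmp C f x) = cmp C h x"
  using assms cmp_assoc by metis

lemma biprod_cancel:
  assumes "is_biprod C X Y (S,i1,i2,p1,p2)" "x \<in> Mor C"
  shows "ccod C x = X \<Longrightarrow> cmp C p1 (cmp C i1 x) = x"
    "ccod C x = Y \<Longrightarrow> cmp C p2 (cmp C i2 x) = x"
    "ccod C x = Y \<Longrightarrow> cmp C p1 (cmp C i2 x) = mzero C (cdom C x) X"
    "ccod C x = X \<Longrightarrow> cmp C p2 (cmp C i1 x) = mzero C (cdom C x) Y"
  using biprodD[OF assms(1)] assms(2)
  by (auto simp: cmp_reassoc[where h="idm C X"] cmp_reassoc[where h="idm C Y"]
        cmp_reassoc[where h="mzero C Y X"] cmp_reassoc[where h="mzero C X Y"])

lemma biprod_ext: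
  assumes bp: "is_biprod C X Y (S,i1,i2,p1,p2)"
    and h: "h \<in> Mor C" "cdom C h = S" and k: "k \<in> Mor C" "cdom C k = S" "ccod C h = ccod C k"
    and e1: "cmp C h i1 = cmp C k i1" and e2: "cmp C h i2 = cmp C k i2"
  shows "h = k"
proof -
  note b = biprodD[OF bp]
  have "h = cmp C h (madd C (cmp C i1 p1) (cmp C i2 p2))" using b h by simp
  also have "\<dots> = madd C (cmp C (cmp C h i1) p1) (cmp C (cmp C h i2) p2)"
    using b(1-19) h by (simp add: cmp_madd_left cmp_assoc)
  also have "\<dots> = madd C (cmp C (cmp C k i1) p1) (cmp C (cmp C k i2) p2)" by (simp add: e1 e2)
  also have "\<dots> = cmp C k (madd C (cmp C i1 p1) (cmp C i2 p2))"
    using b(1-19) k by (simp add: cmp_madd_left cmp_assoc)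
  also have "\<dots> = k" using b k by simp
  finally show ?thesis .
qed

definition oplus_mor :: "'m \<Rightarrow> 'm \<Rightarrow> 'm \<Rightarrow> 'm \<Rightarrow> 'm \<Rightarrow> 'm \<Rightarrow> 'm" where
  "oplus_mor j1 j2 p1 p2 f g = madd C (cmp C j1 (cmp C f p1)) (cmp C j2 (cmp C g p2))"

context
  fixes X Y S i1 i2 p1 p2 X' Y' T j1 j2 q1 q2 f g
  assumes D: "is_biprod C X Y (S,i1,i2,p1,p2)" and D': "is_biprod C X' Y' (T,j1,j2,q1,q2)"
    and f: "f \<in> Mor C" "cdom C f = X" "ccod C f = X'"
    and g: "g \<in> Mor C" "cdom C g = Y" "ccod C g = Y'"
begin

lemma oplus_mor_typ:
  "oplus_mor j1 j2 p1 p2 f g \<in> Mor C" "cdom C (oplus_mor j1 j2 p1 p2 f g) = S"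
  "ccod C (oplus_mor j1 j2 p1 p2 f g) = T"
  using biprodD[OF D] biprodD[OF D'] f g by (auto simp: oplus_mor_def)

lemma oplus_mor_inj1: "cmp C (oplus_mor j1 j2 p1 p2 f g) i1 = cmp C j1 f"
  and oplus_mor_inj2: "cmp C (oplus_mor j1 j2 p1 p2 f g) i2 = cmp C j2 g"
  using biprodD[OF D] biprodD[OF D'] f g biprod_cancel[OF D]
  by (simp_all add: oplus_mor_def cmp_madd_right cmp_assoc)

lemma oplus_mor_proj1: "cmp C q1 (oplus_mor j1 j2 p1 p2 f g) = cmp C f p1"
  and oplus_mor_proj2: "cmp C q2 (oplus_mor j1 j2 p1 p2 f g) = cmp C g p2"
  using biprodD[OF D] biprodD[OF D'] f g biprod_cancel[OF D']
  by (simp_all add: oplus_mor_def cmp_madd_left cmp_assoc)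

end

lemma oplus_mor_Hom:
  assumes D: "is_biprod C X Y (S,i1,i2,p1,p2)" and D': "is_biprod C X' Y' (T,j1,j2,q1,q2)"
    and "f \<in> Hom C X X'" "g \<in> Hom C Y Y'"
  shows "oplus_mor j1 j2 p1 p2 f g \<in> Hom C S T \<and>
    cmp C (oplus_mor j1 j2 p1 p2 f g) i1 = cmp C j1 f \<and>
    cmp C (oplus_mor j1 j2 p1 p2 f g) i2 = cmp C j2 g \<and>
    cmp C q1 (oplus_mor j1 j2 p1 p2 f g) = cmp C f p1 \<and>
    cmp C q2 (oplus_mor j1 j2 p1 p2 f g) = cmp C g p2"
proof -
  have f: "f \<in> Mor C" "cdom C f = X" "ccod C f = X'" and g: "g \<in> Mor C" "cdom C g = Y" "ccod C g = Y'"
    using assms(3,4) by (simp_all add: Hom_iff)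
  show ?thesis
    using oplus_mor_typ[OF D D' f g] oplus_mor_inj1[OF D D' f g] oplus_mor_inj2[OF D D' f g]
      oplus_mor_proj1[OF D D' f g] oplus_mor_proj2[OF D D' f g]
    by (simp add: Hom_iff)
qed

lemma oplus_mor_cmp:
  assumes D: "is_biprod C X Y (S,i1,i2,p1,p2)" and D': "is_biprod C X' Y' (T,j1,j2,q1,q2)"
    and D'': "is_biprod C X'' Y'' (U,k1,k2,r1,r2)"
    and f: "f \<in> Mor C" "cdom C f = X" "ccod C f = X'"
    and g: "g \<in> Mor C" "cdom C g = Y" "ccod C g = Y'"
    and f': "f' \<in> Mor C" "cdom C f' = X'" "ccod C f' = X''"
    and g': "g' \<in> Mor C" "cdom C g' = Y'" "ccod C g' = Y''"
  shows "cmp C (oplus_mor k1 k2 q1 q2 f' g') (oplus_mor j1 j2 p1 p2 f g)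
    = oplus_mor k1 k2 p1 p2 (cmp C f' f) (cmp C g' g)"
proof -
  have ff: "cmp C f' f \<in> Mor C" "cdom C (cmp C f' f) = X" "ccod C (cmp C f' f) = X''"
    and gg: "cmp C g' g \<in> Mor C" "cdom C (cmp C g' g) = Y" "ccod C (cmp C g' g) = Y''"
    using f g f' g' by auto
  note t1 = oplus_mor_typ[OF D D' f g] and t2 = oplus_mor_typ[OF D' D'' f' g']
    and t3 = oplus_mor_typ[OF D D'' ff gg]
  note b = biprodD[OF D] biprodD[OF D'] biprodD[OF D'']
  show ?thesis
  proof (rule biprod_ext[OF D])
    have "cmp C (cmp C (oplus_mor k1 k2 q1 q2 f' g') (oplus_mor j1 j2 p1 p2 f g)) i1
        = cmp C (oplus_mor k1 k2 q1 q2 f' g') (cmp C j1 f)"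
      using t1 t2 b by (simp add: cmp_assoc oplus_mor_inj1[OF D D' f g])
    also have "\<dots> = cmp C k1 (cmp C f' f)"
      using t2 b f f' by (simp add: cmp_assoc[symmetric] oplus_mor_inj1[OF D' D'' f' g'])
    finally show "cmp C (cmp C (oplus_mor k1 k2 q1 q2 f' g') (oplus_mor j1 j2 p1 p2 f g)) i1
        = cmp C (oplus_mor k1 k2 p1 p2 (cmp C f' f) (cmp C g' g)) i1"
      by (simp add: oplus_mor_inj1[OF D D'' ff gg])
    have "cmp C (cmp C (oplus_mor k1 k2 q1 q2 f' g') (oplus_mor j1 j2 p1 p2 f g)) i2
        = cmp C (oplus_mor k1 k2 q1 q2 f' g') (cmp C j2 g)"
      using t1 t2 b by (simp add: cmp_assoc oplus_mor_inj2[OF D D' f g])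
    also have "\<dots> = cmp C k2 (cmp C g' g)"
      using t2 b g g' by (simp add: cmp_assoc[symmetric] oplus_mor_inj2[OF D' D'' f' g'])
    finally show "cmp C (cmp C (oplus_mor k1 k2 q1 q2 f' g') (oplus_mor j1 j2 p1 p2 f g)) i2
        = cmp C (oplus_mor k1 k2 p1 p2 (cmp C f' f) (cmp C g' g)) i2"
      by (simp add: oplus_mor_inj2[OF D D'' ff gg])
  qed (use t1 t2 t3 in auto)
qed

lemma oplus_mor_idm:
  assumes D: "is_biprod C X Y (S,i1,i2,p1,p2)"
  shows "oplus_mor i1 i2 p1 p2 (idm C X) (idm C Y) = idm C S"
proof -
  note b = biprodD[OF D]
  have X: "idm C X \<in> Mor C" "cdom C (idm C X) = X" "ccod C (idm C X) = X"
    and Y: "idm C Y \<in> Mor C" "cdom C (idm C Y) = Y" "ccod C (idm C Y) = Y"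
    using b by auto
  show ?thesis
    by (rule biprod_ext[OF D])
      (use oplus_mor_typ[OF D D X Y] oplus_mor_inj1[OF D D X Y] oplus_mor_inj2[OF D D X Y] b
        in simp_all)
qed

lemma iso_objI:
  assumes "f \<in> Mor C" "cdom C f = A" "ccod C f = B" "g \<in> Mor C" "cdom C g = B" "ccod C g = A"
    "cmp C g f = idm C A" "cmp C f g = idm C B"
  shows "iso_obj C A B"
  using assms unfolding iso_obj_def is_iso_def
  by (intro bexI[of _ f] conjI bexI[of _ g]) (auto simp: Hom_iff)

lemma iso_objE:
  assumes "iso_obj C A B"
  obtains f g where "f \<in> Mor C" "cdom C f = A" "ccod C f = B" "g \<in> Mor C" "cdom C g = B"
    "ccod C g = A" "cmp C g f = idm C A" "cmp C f g = idm C B"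
  using assms unfolding iso_obj_def is_iso_def by (auto simp: Hom_iff)

lemma iso_obj_Obj: "iso_obj C A B \<Longrightarrow> A \<in> Obj C \<and> B \<in> Obj C"
  by (erule iso_objE) (metis cdom_obj ccod_obj)

lemma iso_obj_refl: "A \<in> Obj C \<Longrightarrow> iso_obj C A A"
  by (rule iso_objI[of "idm C A" _ _ "idm C A"]) auto

lemma iso_obj_sym: "iso_obj C A B \<Longrightarrow> iso_obj C B A"
  by (erule iso_objE) (rule iso_objI, assumption+)

lemma iso_obj_trans [trans]:
  assumes "iso_obj C A B" "iso_obj C B D"
  shows "iso_obj C A D"
proof -
  obtain f g where f: "f \<in> Mor C" "cdom C f = A" "ccod C f = B" "g \<in> Mor C" "cdom C g = B"
    "ccod C g = A" "cmp C g f = idm C A" "cmp C f g = idm C B"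
    using assms(1) by (rule iso_objE)
  obtain f' g' where f': "f' \<in> Mor C" "cdom C f' = B" "ccod C f' = D" "g' \<in> Mor C"
    "cdom C g' = D" "ccod C g' = B" "cmp C g' f' = idm C B" "cmp C f' g' = idm C D"
    using assms(2) by (rule iso_objE)
  show ?thesis
  proof (rule iso_objI[of "cmp C f' f" _ _ "cmp C g g'"])
    have "cmp C (cmp C g g') (cmp C f' f) = cmp C g (cmp C (cmp C g' f') f)"
      using f(1-6) f'(1-6) by (simp add: cmp_assoc)
    then show "cmp C (cmp C g g') (cmp C f' f) = idm C A" using f f' by simp
    have "cmp C (cmp C f' f) (cmp C g g') = cmp C f' (cmp C (cmp C f g) g')"
      using f(1-6) f'(1-6) by (simp add: cmp_assoc)
    then show "cmp C (cmp C f' f) (cmp C g g') = idm C D" using f f' by simp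
  qed (use f f' in auto)
qed

lemma iso_class_eq_iff:
  assumes "x \<in> Obj C" "y \<in> Obj C"
  shows "iso_class C x = iso_class C y \<longleftrightarrow> iso_obj C x y"
  using assms iso_obj_refl iso_obj_sym iso_obj_trans unfolding iso_class_def by blast

lemma gen_iso: "iso_obj C x y \<Longrightarrow> gen C x = gen C y"
  unfolding gen_def using iso_class_eq_iff iso_obj_Obj by metis

lemma biprod_iso_cong:
  assumes D: "is_biprod C X Y D" and D': "is_biprod C X' Y' D'"
    and "iso_obj C X X'" "iso_obj C Y Y'"
  shows "iso_obj C (fst D) (fst D')"
proof -
  obtain S i1 i2 p1 p2 where d: "D = (S,i1,i2,p1,p2)" by (cases D) auto
  obtain T j1 j2 q1 q2 where d': "D' = (T,j1,j2,q1,q2)" by (cases D') auto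
  note D = D[unfolded d] and D' = D'[unfolded d']
  obtain a a' where a: "a \<in> Mor C" "cdom C a = X" "ccod C a = X'" "a' \<in> Mor C" "cdom C a' = X'"
    "ccod C a' = X" "cmp C a' a = idm C X" "cmp C a a' = idm C X'"
    using assms(3) by (rule iso_objE)
  obtain b b' where b: "b \<in> Mor C" "cdom C b = Y" "ccod C b = Y'" "b' \<in> Mor C" "cdom C b' = Y'"
    "ccod C b' = Y" "cmp C b' b = idm C Y" "cmp C b b' = idm C Y'"
    using assms(4) by (rule iso_objE)
  have "iso_obj C S T"
  proof (rule iso_objI[of "oplus_mor j1 j2 p1 p2 a b" _ _ "oplus_mor i1 i2 q1 q2 a' b'"])
    show "cmp C (oplus_mor i1 i2 q1 q2 a' b') (oplus_mor j1 j2 p1 p2 a b) = idm C S"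
      using oplus_mor_cmp[OF D D' D, of a b a' b'] a b oplus_mor_idm[OF D] by simp
    show "cmp C (oplus_mor j1 j2 p1 p2 a b) (oplus_mor i1 i2 q1 q2 a' b') = idm C T"
      using oplus_mor_cmp[OF D' D D', of a' b' a b] a b oplus_mor_idm[OF D'] by simp
  qed (use oplus_mor_typ[OF D D' a(1-3) b(1-3)] oplus_mor_typ[OF D' D a(4-6) b(4-6)] in auto)
  then show ?thesis using d d' by simp
qed

lemma biprod_swap:
  assumes D: "is_biprod C X Y (S,i1,i2,p1,p2)"
  shows "is_biprod C Y X (S,i2,i1,p2,p1)"
proof -
  note b = biprodD[OF D]
  have "madd C (cmp C i2 p2) (cmp C i1 p1) = madd C (cmp C i1 p1) (cmp C i2 p2)"
    by (rule madd_comm) (use b(1-15) in simp_all)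
  then show ?thesis using b unfolding is_biprod_def by (simp add: Hom_iff)
qed

lemma zero_obj_iso: "is_zero_obj C Z \<Longrightarrow> is_zero_obj C Z' \<Longrightarrow> iso_obj C Z Z'"
  unfolding is_zero_obj_def by (rule iso_objI[of "mzero C Z Z'" _ _ "mzero C Z' Z"]) auto

lemma biprod_zero_right:
  assumes D: "is_biprod C X Z D" and z: "is_zero_obj C Z"
  shows "iso_obj C (fst D) X"
proof -
  obtain S i1 i2 p1 p2 where d: "D = (S,i1,i2,p1,p2)" by (cases D) auto
  note b = biprodD[OF D[unfolded d]]
  have i2: "i2 = mzero C Z S"
  proof -
    have "i2 = cmp C i2 (idm C Z)" using b by simp
    then show ?thesis using z b unfolding is_zero_obj_def by simp
  qed
  have "cmp C i1 p1 = idm C S"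
    by (rule biprod_ext[OF D[unfolded d]]) (use b i2 in \<open>simp_all add: cmp_assoc\<close>)
  then have "iso_obj C S X" using b by (intro iso_objI[of p1 _ _ i1]) simp_all
  then show ?thesis using d by simp
qed

text \<open>The injection of Y \<oplus> Z into (X \<oplus> Y) \<oplus> Z is i2 \<oplus> id, with retraction p2 \<oplus> id.\<close>

lemma biprod_assoc:
  assumes D1: "is_biprod C X Y (S,i1,i2,p1,p2)" and D2: "is_biprod C S Z (T,j1,j2,q1,q2)"
    and D3: "is_biprod C Y Z (U,k1,k2,r1,r2)"
  shows "is_biprod C X U (T, cmp C j1 i1, oplus_mor j1 j2 r1 r2 i2 (idm C Z), cmp C p1 q1,
    oplus_mor k1 k2 q1 q2 p2 (idm C Z))"
proof -
  note b1 = biprodD[OF D1] and b2 = biprodD[OF D2] and b3 = biprodD[OF D3]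
  define inU where "inU = oplus_mor j1 j2 r1 r2 i2 (idm C Z)"
  define prU where "prU = oplus_mor k1 k2 q1 q2 p2 (idm C Z)"
  have i2t: "i2 \<in> Mor C" "cdom C i2 = Y" "ccod C i2 = S"
    and p2t: "p2 \<in> Mor C" "cdom C p2 = S" "ccod C p2 = Y"
    and zt: "idm C Z \<in> Mor C" "cdom C (idm C Z) = Z" "ccod C (idm C Z) = Z"
    using b1 b2 by auto
  note inU_typ = oplus_mor_typ[OF D3 D2 i2t zt, folded inU_def]
  note prU_typ = oplus_mor_typ[OF D2 D3 p2t zt, folded prU_def]
  have inU_prU: "cmp C q1 inU = cmp C i2 r1" "cmp C q2 inU = r2" "cmp C inU k1 = cmp C j1 i2"
    "cmp C inU k2 = j2" "cmp C prU j1 = cmp C k1 p2" "cmp C prU j2 = k2"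
    "cmp C r1 prU = cmp C p2 q1" "cmp C r2 prU = q2"
    using oplus_mor_proj1[OF D3 D2 i2t zt] oplus_mor_proj2[OF D3 D2 i2t zt]
      oplus_mor_inj1[OF D3 D2 i2t zt] oplus_mor_inj2[OF D3 D2 i2t zt]
      oplus_mor_inj1[OF D2 D3 p2t zt] oplus_mor_inj2[OF D2 D3 p2t zt]
      oplus_mor_proj1[OF D2 D3 p2t zt] oplus_mor_proj2[OF D2 D3 p2t zt] b2 b3
    unfolding inU_def prU_def by simp_all
  have inU_prU_cmp:
    "\<And>x. x \<in> Mor C \<Longrightarrow> ccod C x = U \<Longrightarrow> cmp C q1 (cmp C inU x) = cmp C i2 (cmp C r1 x)"
    "\<And>x. x \<in> Mor C \<Longrightarrow> ccod C x = U \<Longrightarrow> cmp C q2 (cmp C inU x) = cmp C r2 x"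
    "\<And>x. x \<in> Mor C \<Longrightarrow> ccod C x = Y \<Longrightarrow> cmp C inU (cmp C k1 x) = cmp C j1 (cmp C i2 x)"
    "\<And>x. x \<in> Mor C \<Longrightarrow> ccod C x = Z \<Longrightarrow> cmp C inU (cmp C k2 x) = cmp C j2 x"
    "\<And>x. x \<in> Mor C \<Longrightarrow> ccod C x = S \<Longrightarrow> cmp C prU (cmp C j1 x) = cmp C k1 (cmp C p2 x)"
    "\<And>x. x \<in> Mor C \<Longrightarrow> ccod C x = Z \<Longrightarrow> cmp C prU (cmp C j2 x) = cmp C k2 x"
    "\<And>x. x \<in> Mor C \<Longrightarrow> ccod C x = T \<Longrightarrow> cmp C r1 (cmp C prU x) = cmp C p2 (cmp C q1 x)"
    "\<And>x. x \<in> Mor C \<Longrightarrow> ccod C x = T \<Longrightarrow> cmp C r2 (cmp C prU x) = cmp C q2 x"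
    using cmp_reassoc[OF inU_prU(1)] cmp_reassoc[OF inU_prU(2)] cmp_reassoc[OF inU_prU(3)] cmp_reassoc[OF inU_prU(4)]
      cmp_reassoc[OF inU_prU(5)] cmp_reassoc[OF inU_prU(6)] cmp_reassoc[OF inU_prU(7)] cmp_reassoc[OF inU_prU(8)]
      inU_typ prU_typ b1(1-15) b2(1-15) b3(1-15)
    by (simp_all add: cmp_assoc)
  note eqs = b1(1-15) b2(1-15) b3(1-15) inU_typ prU_typ inU_prU_cmp inU_prU biprod_cancel[OF D1] biprod_cancel[OF D2]
    biprod_cancel[OF D3] cmp_assoc cmp_madd_left cmp_madd_right
  have X_idm: "cmp C (cmp C p1 q1) (cmp C j1 i1) = idm C X" using eqs b1(16) by simp
  have U_idm: "cmp C prU inU = idm C U"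
    using oplus_mor_cmp[OF D3 D2 D3 i2t zt p2t zt] b1 b3 oplus_mor_idm[OF D3]
    unfolding inU_def prU_def by simp
  have UX_zero: "cmp C (cmp C p1 q1) inU = mzero C U X" using eqs b1(18) by simp
  have XU_zero: "cmp C prU (cmp C j1 i1) = mzero C X U" using eqs b1(19) by simp
  let ?e = "madd C (cmp C (cmp C j1 i1) (cmp C p1 q1)) (cmp C inU prU)"
  have T_idm: "?e = idm C T"
  proof (rule biprod_ext[OF D2])
    show "cmp C ?e j1 = cmp C (idm C T) j1"
    proof (rule biprod_ext[OF D1])
      show "cmp C (cmp C ?e j1) i1 = cmp C (cmp C (idm C T) j1) i1"
        using eqs b1(16-19) b2(16-19) b3(16-19) by simp
      show "cmp C (cmp C ?e j1) i2 = cmp C (cmp C (idm C T) j1) i2"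
        using eqs b1(16-19) b2(16-19) b3(16-19) by simp
    qed (use eqs in simp_all)
    show "cmp C ?e j2 = cmp C (idm C T) j2" using eqs b1(16-19) b2(16-19) b3(16-19) by simp
  qed (use eqs in simp_all)
  show ?thesis
    unfolding is_biprod_def inU_def[symmetric] prU_def[symmetric]
    using X_idm U_idm UX_zero XU_zero T_idm b1 b2 b3 inU_typ prU_typ by (simp add: Hom_iff)
qed

end

section \<open>Finite direct sums\<close>

context additive_cat
begin

lemma biprod_swap_ex: "is_biprod C X Y D \<Longrightarrow> \<exists>D'. is_biprod C Y X D' \<and> fst D' = fst D"
  by (cases D) (use biprod_swap in fastforce)

definition zero_obj :: 'o where
  "zero_obj = (SOME Z. is_zero_obj C Z)"

definition biprod_of :: "'o \<Rightarrow> 'o \<Rightarrow> ('o,'m) bp" where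
  "biprod_of X Y = (SOME D. is_biprod C X Y D)"

lemma zero_obj: "is_zero_obj C zero_obj" "zero_obj \<in> Obj C"
  using someI_ex[OF zero_obj_exists] unfolding zero_obj_def is_zero_obj_def by auto

lemma biprod_of: "X \<in> Obj C \<Longrightarrow> Y \<in> Obj C \<Longrightarrow> is_biprod C X Y (biprod_of X Y)"
  unfolding biprod_of_def by (rule someI_ex) (rule biprod_exists)

primrec bigsum :: "'o list \<Rightarrow> 'o" where
  "bigsum [] = zero_obj"
| "bigsum (x # xs) = fst (biprod_of x (bigsum xs))"

lemma bigsum_Obj: "set xs \<subseteq> Obj C \<Longrightarrow> bigsum xs \<in> Obj C"
  by (induction xs) (auto simp: zero_obj intro: biprod_Obj[OF biprod_of])

lemma bigsum_singleton: "a \<in> Obj C \<Longrightarrow> iso_obj C (bigsum [a]) a"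
  using biprod_zero_right[OF biprod_of zero_obj(1)] zero_obj by simp

lemma bigsum_Cons_cong:
  assumes "iso_obj C a a'" "iso_obj C (bigsum xs) (bigsum xs')"
  shows "iso_obj C (bigsum (a # xs)) (bigsum (a' # xs'))"
  using biprod_iso_cong[OF biprod_of biprod_of assms] iso_obj_Obj[OF assms(1)]
    iso_obj_Obj[OF assms(2)] by simp

lemma bigsum_append:
  assumes "set xs \<subseteq> Obj C" "set ys \<subseteq> Obj C" "is_biprod C (bigsum xs) (bigsum ys) D"
  shows "iso_obj C (bigsum (xs @ ys)) (fst D)"
  using assms
proof (induction xs arbitrary: D)
  case Nil
  obtain D' where D': "is_biprod C (bigsum ys) zero_obj D'" "fst D' = fst D"
    using biprod_swap_ex Nil(3) by fastforce
  show ?case using biprod_zero_right[OF D'(1) zero_obj(1)] D'(2) by (simp add: iso_obj_sym)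
next
  case (Cons x xs)
  have o: "x \<in> Obj C" "set xs \<subseteq> Obj C" "bigsum xs \<in> Obj C" "bigsum ys \<in> Obj C"
    "bigsum (xs @ ys) \<in> Obj C"
    using Cons.prems bigsum_Obj by auto
  define E where "E = biprod_of (bigsum xs) (bigsum ys)"
  have E: "is_biprod C (bigsum xs) (bigsum ys) E" using biprod_of o E_def by simp
  have fE: "fst E \<in> Obj C" using biprod_Obj E .
  have "iso_obj C (bigsum ((x # xs) @ ys)) (fst (biprod_of x (fst E)))"
    using biprod_iso_cong[OF biprod_of[OF o(1) o(5)] biprod_of[OF o(1) fE] iso_obj_refl[OF o(1)]
      Cons.IH[OF o(2) Cons.prems(2) E]] by simp
  moreover have "iso_obj C (fst (biprod_of x (fst E))) (fst D)"
  proof -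
    obtain S i1 i2 p1 p2 where d1: "biprod_of x (bigsum xs) = (S,i1,i2,p1,p2)"
      by (cases "biprod_of x (bigsum xs)") auto
    obtain T j1 j2 q1 q2 where d2: "D = (T,j1,j2,q1,q2)" by (cases D) auto
    obtain U k1 k2 r1 r2 where d3: "E = (U,k1,k2,r1,r2)" by (cases E) auto
    have D1: "is_biprod C x (bigsum xs) (S,i1,i2,p1,p2)" using biprod_of[OF o(1) o(3)] d1 by simp
    have D2: "is_biprod C S (bigsum ys) (T,j1,j2,q1,q2)" using Cons.prems(3) d1 d2 by simp
    have D3: "is_biprod C (bigsum xs) (bigsum ys) (U,k1,k2,r1,r2)" using E d3 by simp
    show ?thesis
      using biprod_iso_cong[OF biprod_of[OF o(1) fE] biprod_assoc[OF D1 D2 D3]] d2 d3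
        iso_obj_refl[OF o(1)] iso_obj_refl[OF fE] by simp
  qed
  ultimately show ?case by (rule iso_obj_trans)
qed

lemma bigsum_append_comm:
  assumes "set xs \<subseteq> Obj C" "set ys \<subseteq> Obj C"
  shows "iso_obj C (bigsum (xs @ ys)) (bigsum (ys @ xs))"
proof -
  have o: "bigsum xs \<in> Obj C" "bigsum ys \<in> Obj C" using assms bigsum_Obj by auto
  obtain D' where D': "is_biprod C (bigsum ys) (bigsum xs) D'"
    "fst D' = fst (biprod_of (bigsum xs) (bigsum ys))"
    using biprod_swap_ex[OF biprod_of[OF o]] by auto
  show ?thesis
    using bigsum_append[OF assms biprod_of[OF o]] bigsum_append[OF assms(2,1) D'(1)] D'(2)
    by (metis iso_obj_sym iso_obj_trans)
qed

lemma bigsum_iso_cong: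
  assumes "image_mset (iso_class C) (mset xs) = image_mset (iso_class C) (mset ys)"
    "set xs \<subseteq> Obj C" "set ys \<subseteq> Obj C"
  shows "iso_obj C (bigsum xs) (bigsum ys)"
  using assms
proof (induction xs arbitrary: ys)
  case Nil
  then show ?case using zero_obj iso_obj_refl by simp
next
  case (Cons x xs)
  have "iso_class C x \<in># image_mset (iso_class C) (mset ys)"
    using Cons.prems(1) by (metis mset.simps(2) image_mset_add_mset union_single_eq_member)
  then obtain y where y: "y \<in> set ys" "iso_class C y = iso_class C x" by auto
  obtain ys1 ys2 where ys: "ys = ys1 @ y # ys2" using split_list[OF y(1)] by auto
  have o: "set ys1 \<subseteq> Obj C" "set ys2 \<subseteq> Obj C" "y \<in> Obj C" using Cons.prems ys by auto
  have xy: "iso_obj C x y" using iso_class_eq_iff[of x y] y Cons.prems by auto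
  have "image_mset (iso_class C) (mset xs) = image_mset (iso_class C) (mset (ys1 @ ys2))"
    using Cons.prems(1) ys y(2) by simp
  then have "iso_obj C (bigsum xs) (bigsum (ys1 @ ys2))" using Cons.IH Cons.prems ys by auto
  then have "iso_obj C (bigsum (x # xs)) (bigsum (y # ys1 @ ys2))" by (rule bigsum_Cons_cong[OF xy])
  also have "iso_obj C (bigsum (y # ys1 @ ys2)) (bigsum (y # ys2 @ ys1))"
    using bigsum_Cons_cong[OF iso_obj_refl[OF o(3)] bigsum_append_comm[OF o(1,2)]] .
  also have "iso_obj C (bigsum (y # ys2 @ ys1)) (bigsum (ys1 @ y # ys2))"
    using bigsum_append_comm[of "y # ys2" ys1] o by (simp add: iso_obj_sym)
  finally show ?case using ys by simp
qed

end

section \<open>n-angulated categories\<close>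

lemma all_less_split_last:
  "0 < (n::nat) \<Longrightarrow> (\<forall>i<n. P i) \<longleftrightarrow> (\<forall>i<n - 1. P i) \<and> P (n - 1)"
  by (cases n) (auto simp: less_Suc_eq)

text \<open>Through the extended indexing of the mapping cone, the last morphism of an n-\<Sigma>-sequence
  and the last square of a morphism of sequences stop being special cases.\<close>

lemma nseq_iff:
  assumes "0 < n"
  shows "nseq C SO n As fs \<longleftrightarrow> length As = n \<and> length fs = n \<and>
    (\<forall>i<n. fs ! i \<in> Hom C (As ! i) (ext_obj SO n As (Suc i)))"
  using assms unfolding nseq_def all_less_split_last[OF assms, of "\<lambda>i. fs ! i \<in> _ i"]
  by (auto simp: ext_obj_def less_diff_conv)

lemma seq_mor_iff:
  assumes "0 < n"
  shows "seq_mor C SM n (As, fs) (Bs, gs) ph \<longleftrightarrow> length ph = n \<and>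
    (\<forall>i<n. ph ! i \<in> Hom C (As ! i) (Bs ! i)) \<and>
    (\<forall>i<n. cmp C (gs ! i) (ph ! i) = cmp C (ext_mor SM n ph (Suc i)) (fs ! i))"
  using assms unfolding seq_mor_def
    all_less_split_last[OF assms, of "\<lambda>i. cmp C (gs ! i) (ph ! i) = _ i"]
  by (auto simp: ext_mor_def less_diff_conv)

locale n_angulated_cat = additive_cat C for C :: "('o,'m) addcat" +
  fixes SO :: "'o \<Rightarrow> 'o" and SM :: "'m \<Rightarrow> 'm" and n :: nat
    and N :: "('o list \<times> 'm list) set"
  assumes n_angulated: "n_angulated C SO SM n N"
begin

lemma n_ge_3: "3 \<le> n"
  using n_angulated unfolding n_angulated_def by (elim conjE)

lemma angle_nseq:
  assumes "(As, fs) \<in> N"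
  shows "nseq C SO n As fs"
proof -
  have "\<forall>X \<in> N. nseq C SO n (fst X) (snd X)"
    using n_angulated unfolding n_angulated_def by (elim conjE)
  then show ?thesis using assms by fastforce
qed

lemma angle_dsum_closed:
  assumes "X \<in> N" "Y \<in> N" "nseq C SO n (fst Z) (snd Z)" "seq_dsum C SM n X Y Z"
  shows "Z \<in> N"
proof -
  have "\<forall>X Y Z. X \<in> N \<longrightarrow> Y \<in> N \<longrightarrow> nseq C SO n (fst Z) (snd Z) \<longrightarrow>
      seq_dsum C SM n X Y Z \<longrightarrow> Z \<in> N"
    using n_angulated unfolding n_angulated_def by (elim conjE)
  then show ?thesis using assms by blast
qed

lemma angle_iso_closed:
  assumes "X \<in> N" "nseq C SO n (fst Y) (snd Y)" "seq_iso C SM n X Y"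
  shows "Y \<in> N"
proof -
  have "\<forall>X Y. X \<in> N \<longrightarrow> nseq C SO n (fst Y) (snd Y) \<longrightarrow> seq_iso C SM n X Y \<longrightarrow> Y \<in> N"
    using n_angulated unfolding n_angulated_def by (elim conjE)
  then show ?thesis using assms by blast
qed

lemma trivial_angle:
  assumes "A \<in> Obj C" "is_zero_obj C Z"
  shows "triv_seq C SO n A Z \<in> N"
proof -
  have "\<forall>A \<in> Obj C. \<forall>Z. is_zero_obj C Z \<longrightarrow> triv_seq C SO n A Z \<in> N"
    using n_angulated unfolding n_angulated_def by (elim conjE)
  then show ?thesis using assms by blast
qed

lemma angle_rotl:
  assumes X: "X \<in> N"
  shows "rotl C SO SM n X \<in> N"
proof -
  have "\<forall>X. nseq C SO n (fst X) (snd X) \<longrightarrow> (X \<in> N \<longleftrightarrow> rotl C SO SM n X \<in> N)"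
    using n_angulated unfolding n_angulated_def by (elim conjE)
  then show ?thesis using X angle_nseq[of "fst X" "snd X"] by (metis prod.collapse)
qed

lemma automorphism: "is_automorphism C SO SM"
  using n_angulated unfolding n_angulated_def by (elim conjE)

lemma SO_bij: "bij_betw SO (Obj C) (Obj C)"
  using automorphism unfolding is_automorphism_def by (elim conjE)

lemma SO_Obj [simp]: "A \<in> Obj C \<Longrightarrow> SO A \<in> Obj C"
  using SO_bij by (auto dest: bij_betwE)

lemma SO_surj: "B \<in> Obj C \<Longrightarrow> \<exists>A \<in> Obj C. SO A = B"
  using SO_bij by (metis bij_betw_imp_surj_on imageE)

lemma SM_typ [simp]:
  assumes "f \<in> Mor C"
  shows "SM f \<in> Mor C" "cdom C (SM f) = SO (cdom C f)" "ccod C (SM f) = SO (ccod C f)"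
proof -
  have "\<forall>A B f. f \<in> Hom C A B \<longrightarrow> SM f \<in> Hom C (SO A) (SO B)"
    using automorphism unfolding is_automorphism_def by (elim conjE)
  then show "SM f \<in> Mor C" "cdom C (SM f) = SO (cdom C f)" "ccod C (SM f) = SO (ccod C f)"
    using assms by (auto simp: Hom_iff)
qed

lemma SM_cmp:
  assumes "f \<in> Mor C" "g \<in> Mor C" "ccod C f = cdom C g"
  shows "SM (cmp C g f) = cmp C (SM g) (SM f)"
proof -
  have "\<forall>A B D f g. f \<in> Hom C A B \<longrightarrow> g \<in> Hom C B D \<longrightarrow> SM (cmp C g f) = cmp C (SM g) (SM f)"
    using automorphism unfolding is_automorphism_def by (elim conjE)
  then show ?thesis using assms by (auto simp: Hom_iff)
qed

lemma SM_idm [simp]: "A \<in> Obj C \<Longrightarrow> SM (idm C A) = idm C (SO A)"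
proof -
  have "\<forall>A \<in> Obj C. SM (idm C A) = idm C (SO A)"
    using automorphism unfolding is_automorphism_def by (elim conjE)
  then show "A \<in> Obj C \<Longrightarrow> SM (idm C A) = idm C (SO A)" by blast
qed

lemma SM_madd:
  assumes "f \<in> Mor C" "g \<in> Mor C" "cdom C f = cdom C g" "ccod C f = ccod C g"
  shows "SM (madd C f g) = madd C (SM f) (SM g)"
proof -
  have "\<forall>A B f g. f \<in> Hom C A B \<longrightarrow> g \<in> Hom C A B \<longrightarrow> SM (madd C f g) = madd C (SM f) (SM g)"
    using automorphism unfolding is_automorphism_def by (elim conjE)
  then show ?thesis using assms by (auto simp: Hom_iff)
qed

lemma SM_mzero [simp]:
  assumes "A \<in> Obj C" "B \<in> Obj C"
  shows "SM (mzero C A B) = mzero C (SO A) (SO B)"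
proof -
  have "madd C (SM (mzero C A B)) (SM (mzero C A B)) = SM (mzero C A B)"
    using SM_madd[of "mzero C A B" "mzero C A B"] assms by simp
  from madd_idem_eq_mzero[OF _ this] assms show ?thesis by simp
qed

lemma biprod_Sigma:
  assumes D: "is_biprod C X Y (S,i1,i2,p1,p2)"
  shows "is_biprod C (SO X) (SO Y) (SO S, SM i1, SM i2, SM p1, SM p2)"
proof -
  note b = biprodD[OF D]
  have "madd C (cmp C (SM i1) (SM p1)) (cmp C (SM i2) (SM p2)) = SM (idm C S)"
    using b(1-15) by (simp add: SM_madd SM_cmp flip: b(20))
  moreover have "SM (cmp C p1 i1) = cmp C (SM p1) (SM i1)" "SM (cmp C p2 i2) = cmp C (SM p2) (SM i2)"
    "SM (cmp C p1 i2) = cmp C (SM p1) (SM i2)" "SM (cmp C p2 i1) = cmp C (SM p2) (SM i1)"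
    using b(1-15) by (simp_all add: SM_cmp)
  ultimately show ?thesis using b unfolding is_biprod_def by (simp add: Hom_iff)
qed

lemma iso_obj_Sigma: "iso_obj C A B \<Longrightarrow> iso_obj C (SO A) (SO B)"
proof (erule iso_objE)
  fix f g assume f: "f \<in> Mor C" "cdom C f = A" "ccod C f = B" "g \<in> Mor C" "cdom C g = B"
    "ccod C g = A" "cmp C g f = idm C A" "cmp C f g = idm C B"
  show "iso_obj C (SO A) (SO B)"
    by (rule iso_objI[of "SM f" _ _ "SM g"]) (use f SM_cmp[of f g] SM_cmp[of g f] in auto)
qed

lemma zero_obj_Sigma: "is_zero_obj C Z \<Longrightarrow> is_zero_obj C (SO Z)"
  unfolding is_zero_obj_def by (metis SM_idm SM_mzero SO_Obj)

lemma bigsum_Sigma: "set xs \<subseteq> Obj C \<Longrightarrow> iso_obj C (SO (bigsum xs)) (bigsum (map SO xs))"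
proof (induction xs)
  case Nil
  then show ?case using zero_obj_iso[OF zero_obj_Sigma[OF zero_obj(1)] zero_obj(1)] by simp
next
  case (Cons x xs)
  have o: "x \<in> Obj C" "bigsum xs \<in> Obj C" "set (map SO xs) \<subseteq> Obj C"
    using Cons.prems bigsum_Obj by auto
  obtain S i1 i2 p1 p2 where d: "biprod_of x (bigsum xs) = (S,i1,i2,p1,p2)"
    by (cases "biprod_of x (bigsum xs)") auto
  have "is_biprod C (SO x) (SO (bigsum xs)) (SO S, SM i1, SM i2, SM p1, SM p2)"
    using biprod_Sigma biprod_of[OF o(1,2)] d by simp
  from biprod_iso_cong[OF this biprod_of[OF SO_Obj[OF o(1)] bigsum_Obj[OF o(3)]]]
  show ?case using d iso_obj_refl[OF SO_Obj[OF o(1)]] Cons by simp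
qed

end

context n_angulated_cat
begin

lemma n_pos: "0 < n"
  using n_ge_3 by simp

lemma angle_length: "(As, fs) \<in> N \<Longrightarrow> length As = n"
  using angle_nseq unfolding nseq_def by blast

lemma angle_Hom: "(As, fs) \<in> N \<Longrightarrow> i < n \<Longrightarrow> fs ! i \<in> Hom C (As ! i) (ext_obj SO n As (Suc i))"
  using angle_nseq nseq_iff[OF n_pos] by blast

lemma angle_Obj: "(As, fs) \<in> N \<Longrightarrow> i < n \<Longrightarrow> As ! i \<in> Obj C"
  using angle_Hom[of As fs i] by (auto simp: Hom_iff dest: cdom_obj)

lemma ext_obj_Obj: "(As, fs) \<in> N \<Longrightarrow> j \<le> n \<Longrightarrow> ext_obj SO n As j \<in> Obj C"
  using angle_Obj[of As fs] n_pos by (auto simp: ext_obj_def)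

lemma angle_rotate: "(Os, fs) \<in> N \<Longrightarrow> \<exists>gs. (tl Os @ [SO (hd Os)], gs) \<in> N"
  using angle_rotl[of "(Os, fs)"] unfolding rotl_def by auto

lemma angle_trivial: "A \<in> Obj C \<Longrightarrow> \<exists>fs. ([A, A] @ replicate (n - 2) zero_obj, fs) \<in> N"
  using trivial_angle[OF _ zero_obj(1)] unfolding triv_seq_def by auto

lemma iso_obj_choice:
  assumes "\<forall>i<m. iso_obj C (As ! i) (Bs ! i)"
  shows "\<exists>F G. \<forall>i<m. F i \<in> Hom C (As ! i) (Bs ! i) \<and> G i \<in> Hom C (Bs ! i) (As ! i) \<and>
    cmp C (G i) (F i) = idm C (As ! i) \<and> cmp C (F i) (G i) = idm C (Bs ! i)"
proof -
  have "\<exists>f g. i < m \<longrightarrow> f \<in> Hom C (As ! i) (Bs ! i) \<and> g \<in> Hom C (Bs ! i) (As ! i) \<and>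
      cmp C g f = idm C (As ! i) \<and> cmp C f g = idm C (Bs ! i)" for i
  proof (cases "i < m")
    case True
    with assms have "iso_obj C (As ! i) (Bs ! i)" by blast
    then obtain f g where "f \<in> Mor C" "cdom C f = As ! i" "ccod C f = Bs ! i" "g \<in> Mor C"
      "cdom C g = Bs ! i" "ccod C g = As ! i" "cmp C g f = idm C (As ! i)"
      "cmp C f g = idm C (Bs ! i)"
      by (rule iso_objE)
    then show ?thesis by (auto simp: Hom_iff)
  qed simp
  then show ?thesis by metis
qed

lemma angle_iso_transport:
  assumes X: "(Os, fs) \<in> N" and L: "length Ps = n" and I: "\<forall>i<n. iso_obj C (Os ! i) (Ps ! i)"
  shows "\<exists>gs. (Ps, gs) \<in> N"
proof -
  obtain F G where FG: "\<forall>i<n. F i \<in> Hom C (Os ! i) (Ps ! i) \<and> G i \<in> Hom C (Ps ! i) (Os ! i) \<and>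
      cmp C (G i) (F i) = idm C (Os ! i) \<and> cmp C (F i) (G i) = idm C (Ps ! i)"
    using iso_obj_choice[OF I] by blast
  then have F: "F i \<in> Hom C (Os ! i) (Ps ! i)" "G i \<in> Hom C (Ps ! i) (Os ! i)"
    "cmp C (G i) (F i) = idm C (Os ! i)" "cmp C (F i) (G i) = idm C (Ps ! i)" if "i < n" for i
    using that by auto
  define Fx where "Fx j = ext_mor SM n (map F [0..<n]) j" for j
  have Fx: "Fx (Suc i) \<in> Hom C (ext_obj SO n Os (Suc i)) (ext_obj SO n Ps (Suc i))"
    if "i < n" for i
  proof (cases "Suc i < n")
    case True
    then show ?thesis using F(1)[OF True] unfolding Fx_def by (simp add: ext_mor_def ext_obj_def)
  next
    case False
    then have "Suc i = n" using that by simp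
    then show ?thesis using F(1)[OF n_pos] unfolding Fx_def
      by (simp add: ext_mor_def ext_obj_def Hom_iff)
  qed
  define gs where "gs = map (\<lambda>i. cmp C (Fx (Suc i)) (cmp C (fs ! i) (G i))) [0..<n]"
  have gs: "gs ! i \<in> Hom C (Ps ! i) (ext_obj SO n Ps (Suc i))"
    "cmp C (gs ! i) (F i) = cmp C (Fx (Suc i)) (fs ! i)" if "i < n" for i
  proof -
    note h = F[OF that] Fx[OF that] angle_Hom[OF X that]
    have "ext_obj SO n Os (Suc i) \<in> Obj C" using ext_obj_Obj[OF X] that by simp
    moreover have "ext_obj SO n Ps (Suc i) = ccod C (Fx (Suc i))" using h by (simp add: Hom_iff)
    ultimately show "gs ! i \<in> Hom C (Ps ! i) (ext_obj SO n Ps (Suc i))"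
      using h that unfolding gs_def by (simp add: Hom_iff)
    show "cmp C (gs ! i) (F i) = cmp C (Fx (Suc i)) (fs ! i)"
      using h that unfolding gs_def by (simp add: Hom_iff cmp_assoc)
  qed
  have "nseq C SO n Ps gs"
    using gs(1) L unfolding nseq_iff[OF n_pos] gs_def by simp
  moreover have "seq_iso C SM n (Os, fs) (Ps, gs)"
    unfolding seq_iso_def
  proof (intro exI conjI allI impI)
    show "seq_mor C SM n (Os, fs) (Ps, gs) (map F [0..<n])"
      using F(1) gs(2) unfolding seq_mor_iff[OF n_pos] Fx_def by simp
    show "is_iso C (map F [0..<n] ! i)" if "i < n" for i
      using F[OF that] that unfolding is_iso_def by (auto simp: Hom_iff)
  qed
  ultimately show ?thesis using angle_iso_closed[OF X, of "(Ps, gs)"] by auto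
qed

lemma angle_iso_transport_Cons:
  assumes X: "(Os', fs') \<in> N" and L: "length Os = n" and X0: "iso_obj C (Os' ! 0) X"
    and I: "\<And>i. 0 < i \<Longrightarrow> i < n \<Longrightarrow> iso_obj C (Os' ! i) (Os ! i)"
  shows "\<exists>gs. (X # tl Os, gs) \<in> N"
proof (rule angle_iso_transport[OF X])
  show "length (X # tl Os) = n" using L n_pos by simp
  show "\<forall>i<n. iso_obj C (Os' ! i) ((X # tl Os) ! i)"
    using X0 I L by (auto simp: nth_Cons' nth_tl)
qed

definition ext_biprod :: "'o list \<Rightarrow> 'o list \<Rightarrow> nat \<Rightarrow> ('o,'m) bp" where
  "ext_biprod Os Os' j = (if j < n then biprod_of (Os ! j) (Os' ! j)
     else sig_bp SO SM (biprod_of (Os ! 0) (Os' ! 0)))"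

lemma ext_biprod:
  assumes X: "(Os, fs) \<in> N" and Y: "(Os', fs') \<in> N" and j: "j \<le> n"
  shows "is_biprod C (ext_obj SO n Os j) (ext_obj SO n Os' j) (ext_biprod Os Os' j)"
proof (cases "j < n")
  case True
  then show ?thesis using biprod_of[OF angle_Obj[OF X True] angle_Obj[OF Y True]]
    by (simp add: ext_biprod_def ext_obj_def)
next
  case False
  obtain T k1 k2 q1 q2 where b: "biprod_of (Os ! 0) (Os' ! 0) = (T, k1, k2, q1, q2)"
    by (cases "biprod_of (Os ! 0) (Os' ! 0)") auto
  have "is_biprod C (Os ! 0) (Os' ! 0) (T, k1, k2, q1, q2)"
    using biprod_of[OF angle_Obj[OF X n_pos] angle_Obj[OF Y n_pos]] b by simp
  then show ?thesis using biprod_Sigma[of "Os ! 0" "Os' ! 0"] False j b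
    by (simp add: ext_biprod_def ext_obj_def sig_bp_def)
qed

lemma ext_biprod_components:
  assumes "j \<le> n"
  shows "ext_obj SO n (map (\<lambda>i. fst (ext_biprod Os Os' i)) [0..<n]) j = fst (ext_biprod Os Os' j)"
    "ext_mor SM n (map (\<lambda>i. fst (snd (ext_biprod Os Os' i))) [0..<n]) j
      = fst (snd (ext_biprod Os Os' j))"
    "ext_mor SM n (map (\<lambda>i. fst (snd (snd (ext_biprod Os Os' i)))) [0..<n]) j
      = fst (snd (snd (ext_biprod Os Os' j)))"
    "ext_mor SM n (map (\<lambda>i. fst (snd (snd (snd (ext_biprod Os Os' i))))) [0..<n]) j
      = fst (snd (snd (snd (ext_biprod Os Os' j))))"
    "ext_mor SM n (map (\<lambda>i. snd (snd (snd (snd (ext_biprod Os Os' i))))) [0..<n]) j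
      = snd (snd (snd (snd (ext_biprod Os Os' j))))"
  using assms n_pos
  by (auto simp: ext_obj_def ext_mor_def ext_biprod_def sig_bp_def split: prod.split)

lemma angle_dsum:
  assumes X: "(Os, fs) \<in> N" and Y: "(Os', fs') \<in> N"
  shows "\<exists>Ps gs. (Ps, gs) \<in> N \<and> length Ps = n \<and>
    (\<forall>i<n. \<exists>D. is_biprod C (Os ! i) (Os' ! i) D \<and> fst D = Ps ! i)"
proof -
  define S where "S j = fst (ext_biprod Os Os' j)" for j
  define I1 where "I1 j = fst (snd (ext_biprod Os Os' j))" for j
  define I2 where "I2 j = fst (snd (snd (ext_biprod Os Os' j)))" for j
  define P1 where "P1 j = fst (snd (snd (snd (ext_biprod Os Os' j))))" for j
  define P2 where "P2 j = snd (snd (snd (snd (ext_biprod Os Os' j))))" for j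
  have biprod: "is_biprod C (ext_obj SO n Os j) (ext_obj SO n Os' j) (S j, I1 j, I2 j, P1 j, P2 j)"
    if "j \<le> n" for j
    using ext_biprod[OF X Y that] unfolding S_def I1_def I2_def P1_def P2_def by simp
  have ext: "ext_obj SO n (map S [0..<n]) j = S j" "ext_mor SM n (map I1 [0..<n]) j = I1 j"
    "ext_mor SM n (map I2 [0..<n]) j = I2 j" "ext_mor SM n (map P1 [0..<n]) j = P1 j"
    "ext_mor SM n (map P2 [0..<n]) j = P2 j" if "j \<le> n" for j
    using ext_biprod_components[OF that] unfolding S_def I1_def I2_def P1_def P2_def by simp_all
  have biprod_lt: "is_biprod C (Os ! i) (Os' ! i) (S i, I1 i, I2 i, P1 i, P2 i)" if "i < n" for i
    using biprod[of i] that by (simp add: ext_obj_def)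
  define g where "g i = oplus_mor (I1 (Suc i)) (I2 (Suc i)) (P1 i) (P2 i) (fs ! i) (fs' ! i)" for i
  have g: "g i \<in> Hom C (S i) (S (Suc i)) \<and>
      cmp C (g i) (I1 i) = cmp C (I1 (Suc i)) (fs ! i) \<and>
      cmp C (g i) (I2 i) = cmp C (I2 (Suc i)) (fs' ! i) \<and>
      cmp C (P1 (Suc i)) (g i) = cmp C (fs ! i) (P1 i) \<and>
      cmp C (P2 (Suc i)) (g i) = cmp C (fs' ! i) (P2 i)" if i: "i < n" for i
    using oplus_mor_Hom[OF biprod_lt[OF i] biprod[of "Suc i"] angle_Hom[OF X i] angle_Hom[OF Y i]] i
    unfolding g_def by simp
  define Ps where "Ps = map S [0..<n]"
  define gs where "gs = map g [0..<n]"
  have "nseq C SO n Ps gs"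
    unfolding nseq_iff[OF n_pos] Ps_def gs_def using g ext(1) by simp
  moreover have "seq_dsum C SM n (Os, fs) (Os', fs') (Ps, gs)"
    unfolding seq_dsum_def
  proof (intro exI conjI allI impI)
    have Hom: "i < n \<Longrightarrow> I1 i \<in> Hom C (Os ! i) (S i) \<and> I2 i \<in> Hom C (Os' ! i) (S i) \<and>
      P1 i \<in> Hom C (S i) (Os ! i) \<and> P2 i \<in> Hom C (S i) (Os' ! i)" for i
      using biprodD[OF biprod_lt] by (simp add: Hom_iff)
    show "seq_mor C SM n (Os, fs) (Ps, gs) (map I1 [0..<n])"
      "seq_mor C SM n (Os', fs') (Ps, gs) (map I2 [0..<n])"
      "seq_mor C SM n (Ps, gs) (Os, fs) (map P1 [0..<n])"
      "seq_mor C SM n (Ps, gs) (Os', fs') (map P2 [0..<n])"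
      unfolding seq_mor_iff[OF n_pos] Ps_def gs_def using Hom g ext by simp_all
    show "is_biprod C (fst (Os, fs) ! i) (fst (Os', fs') ! i)
      (fst (Ps, gs) ! i, map I1 [0..<n] ! i, map I2 [0..<n] ! i, map P1 [0..<n] ! i,
       map P2 [0..<n] ! i)" if "i < n" for i
      using biprod_lt[OF that] that unfolding Ps_def by simp
  qed
  ultimately have "(Ps, gs) \<in> N" using angle_dsum_closed[OF X Y] by simp
  moreover have "\<forall>i<n. \<exists>D. is_biprod C (Os ! i) (Os' ! i) D \<and> fst D = Ps ! i"
    using biprod_lt unfolding Ps_def by fastforce
  ultimately show ?thesis unfolding Ps_def by auto
qed

end

section \<open>Realizable tuples\<close>

context n_angulated_cat
begin

abbreviation iso_classes :: "'o multiset \<Rightarrow> 'o set multiset" where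
  "iso_classes \<equiv> image_mset (iso_class C)"

definition realizable :: "(nat \<Rightarrow> 'o multiset) \<Rightarrow> bool" where
  "realizable L \<longleftrightarrow> (\<exists>Os fs. (Os, fs) \<in> N \<and>
     (\<forall>i<n. set_mset (L i) \<subseteq> Obj C \<and> (\<exists>xs. mset xs = L i \<and> iso_obj C (Os ! i) (bigsum xs))))"

lemma realizableI:
  assumes "(Os, fs) \<in> N" "\<And>i. i < n \<Longrightarrow> set_mset (L i) \<subseteq> Obj C"
    "\<And>i. i < n \<Longrightarrow> \<exists>xs. mset xs = L i \<and> iso_obj C (Os ! i) (bigsum xs)"
  shows "realizable L"
  unfolding realizable_def using assms by blast

lemma realizable_angle:
  assumes "realizable L"
  shows "\<exists>Os fs. (Os, fs) \<in> N \<and> (\<forall>i<n. set_mset (L i) \<subseteq> Obj C) \<and>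
    (\<forall>i xs. i < n \<longrightarrow> iso_classes (mset xs) = iso_classes (L i) \<longrightarrow> set xs \<subseteq> Obj C \<longrightarrow>
      iso_obj C (Os ! i) (bigsum xs))"
proof -
  obtain Os fs where X: "(Os, fs) \<in> N" and L: "\<forall>i<n. set_mset (L i) \<subseteq> Obj C \<and>
      (\<exists>xs. mset xs = L i \<and> iso_obj C (Os ! i) (bigsum xs))"
    using assms unfolding realizable_def by blast
  have "iso_obj C (Os ! i) (bigsum ys)"
    if i: "i < n" and ys: "iso_classes (mset ys) = iso_classes (L i)" "set ys \<subseteq> Obj C" for i ys
  proof -
    obtain xs where xs: "mset xs = L i" "iso_obj C (Os ! i) (bigsum xs)" using L i by blast
    have "set xs \<subseteq> Obj C" using L i xs(1) by (metis set_mset_mset)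
    then show ?thesis using xs ys bigsum_iso_cong[of xs ys] iso_obj_trans by metis
  qed
  then show ?thesis using X L by blast
qed

lemma realizable_cong: "(\<And>i. i < n \<Longrightarrow> L i = M i) \<Longrightarrow> realizable L \<Longrightarrow> realizable M"
  unfolding realizable_def by (metis (no_types, lifting))

lemma realizable_add:
  assumes "realizable L" "realizable M"
  shows "realizable (\<lambda>i. L i + M i)"
proof -
  obtain Os fs where X: "(Os, fs) \<in> N" and LO: "\<forall>i<n. set_mset (L i) \<subseteq> Obj C"
    and Liso: "\<forall>i xs. i < n \<longrightarrow> iso_classes (mset xs) = iso_classes (L i) \<longrightarrow> set xs \<subseteq> Obj C \<longrightarrow>
      iso_obj C (Os ! i) (bigsum xs)"
    using realizable_angle[OF assms(1)] by blast
  obtain Os' fs' where Y: "(Os', fs') \<in> N" and MO: "\<forall>i<n. set_mset (M i) \<subseteq> Obj C"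
    and Miso: "\<forall>i xs. i < n \<longrightarrow> iso_classes (mset xs) = iso_classes (M i) \<longrightarrow> set xs \<subseteq> Obj C \<longrightarrow>
      iso_obj C (Os' ! i) (bigsum xs)"
    using realizable_angle[OF assms(2)] by blast
  obtain Ps gs where Z: "(Ps, gs) \<in> N"
    and P: "\<forall>i<n. \<exists>D. is_biprod C (Os ! i) (Os' ! i) D \<and> fst D = Ps ! i"
    using angle_dsum[OF X Y] by blast
  show ?thesis
  proof (rule realizableI[OF Z])
    fix i assume i: "i < n"
    show "set_mset (L i + M i) \<subseteq> Obj C" using LO MO i by simp
    obtain xs ys where xs: "mset xs = L i" and ys: "mset ys = M i" by (metis ex_mset)
    have o: "set xs \<subseteq> Obj C" "set ys \<subseteq> Obj C"
      using LO MO i xs ys by (metis set_mset_mset)+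
    obtain D where D: "is_biprod C (Os ! i) (Os' ! i) D" "fst D = Ps ! i" using P i by blast
    have "iso_obj C (Ps ! i) (fst (biprod_of (bigsum xs) (bigsum ys)))"
      using biprod_iso_cong[OF D(1) biprod_of Liso[rule_format, OF i] Miso[rule_format, OF i]]
        D(2) xs ys o bigsum_Obj
      by simp
    also have "iso_obj C (fst (biprod_of (bigsum xs) (bigsum ys))) (bigsum (xs @ ys))"
      using bigsum_append[OF o biprod_of] o bigsum_Obj by (simp add: iso_obj_sym)
    finally show "\<exists>zs. mset zs = L i + M i \<and> iso_obj C (Ps ! i) (bigsum zs)"
      using xs ys by (intro exI[of _ "xs @ ys"]) simp
  qed
qed

lemma realizable_zero: "realizable (\<lambda>i. {#})"
proof -
  obtain fs where X: "([zero_obj, zero_obj] @ replicate (n - 2) zero_obj, fs) \<in> N"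
    using angle_trivial zero_obj by blast
  have "([zero_obj, zero_obj] @ replicate (n - 2) zero_obj) ! i = zero_obj" if "i < n" for i
    using that by (cases "i < 2") (auto simp: nth_append less_2_cases_iff)
  then show ?thesis
    by (intro realizableI[OF X]) (auto simp: zero_obj iso_obj_refl intro!: exI[of _ "[]"])
qed

definition edge :: "nat \<Rightarrow> 'o multiset \<Rightarrow> nat \<Rightarrow> 'o multiset" where
  "edge k Q i = (if i = k \<or> i = Suc k then Q else {#})"

lemma realizable_edge0: "A \<in> Obj C \<Longrightarrow> realizable (edge 0 {#A#})"
proof -
  assume A: "A \<in> Obj C"
  obtain fs where X: "([A, A] @ replicate (n - 2) zero_obj, fs) \<in> N" using angle_trivial A by blast
  have "\<exists>xs. mset xs = edge 0 {#A#} i \<and>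
      iso_obj C (([A, A] @ replicate (n - 2) zero_obj) ! i) (bigsum xs)" if "i < n" for i
  proof (cases "i < 2")
    case True
    then show ?thesis using iso_obj_sym[OF bigsum_singleton[OF A]]
      by (intro exI[of _ "[A]"]) (auto simp: edge_def nth_append less_2_cases_iff)
  next
    case False
    then show ?thesis using that iso_obj_refl[OF zero_obj(2)]
      by (intro exI[of _ "[]"]) (auto simp: edge_def nth_append)
  qed
  then show ?thesis using A by (intro realizableI[OF X]) (auto simp: edge_def)
qed

definition rot_tuple :: "(nat \<Rightarrow> 'o multiset) \<Rightarrow> nat \<Rightarrow> 'o multiset" where
  "rot_tuple L i = (if i < n - 1 then L (Suc i) else if i = n - 1 then image_mset SO (L 0) else {#})"

lemma realizable_rot_tuple:
  assumes "realizable L"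
  shows "realizable (rot_tuple L)"
proof -
  obtain Os fs where X: "(Os, fs) \<in> N" and L: "\<forall>i<n. set_mset (L i) \<subseteq> Obj C \<and>
      (\<exists>xs. mset xs = L i \<and> iso_obj C (Os ! i) (bigsum xs))"
    using assms unfolding realizable_def by blast
  obtain gs where Y: "(tl Os @ [SO (hd Os)], gs) \<in> N" using angle_rotate[OF X] by blast
  have len: "length Os = n" using angle_length[OF X] .
  have hd: "hd Os = Os ! 0" using len n_pos by (cases Os) auto
  show ?thesis
  proof (rule realizableI[OF Y])
    fix i assume i: "i < n"
    have "set_mset (L 0) \<subseteq> Obj C" using L n_pos by blast
    then have "set_mset (image_mset SO (L 0)) \<subseteq> Obj C" by auto
    then show "set_mset (rot_tuple L i) \<subseteq> Obj C"
      using L i unfolding rot_tuple_def by auto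
    show "\<exists>xs. mset xs = rot_tuple L i \<and> iso_obj C ((tl Os @ [SO (hd Os)]) ! i) (bigsum xs)"
    proof (cases "i < n - 1")
      case True
      then show ?thesis using L len unfolding rot_tuple_def by (simp add: nth_append nth_tl)
    next
      case False
      then have e: "i = n - 1" "(tl Os @ [SO (hd Os)]) ! i = SO (Os ! 0)"
        using i len hd by (simp_all add: nth_append)
      obtain xs where xs: "mset xs = L 0" "iso_obj C (Os ! 0) (bigsum xs)" using L n_pos by blast
      have "set xs \<subseteq> Obj C" using L n_pos xs(1) by (metis set_mset_mset)
      then have "iso_obj C (SO (Os ! 0)) (bigsum (map SO xs))"
        using iso_obj_trans[OF iso_obj_Sigma[OF xs(2)] bigsum_Sigma] by blast
      then show ?thesis using e xs(1) unfolding rot_tuple_def by (intro exI[of _ "map SO xs"]) simp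
    qed
  qed
qed

text \<open>Rotating twice moves an edge at positions 0, 1 to positions n-2, n-1; each further
  rotation moves an edge one step down.\<close>

lemma realizable_edge_singleton:
  assumes B: "B \<in> Obj C" and k: "k \<le> n - 2"
  shows "realizable (edge k {#B#})"
  using k
proof (induction rule: inc_induct)
  case base
  obtain A where A: "A \<in> Obj C" "SO A = B" using SO_surj[OF B] by blast
  have "realizable (rot_tuple (rot_tuple (edge 0 {#A#})))"
    using realizable_rot_tuple realizable_edge0[OF A(1)] by blast
  then show ?case
    by (rule realizable_cong[rotated]) (use n_ge_3 A(2) in \<open>auto simp: rot_tuple_def edge_def\<close>)
next
  case (step k)
  have "realizable (rot_tuple (edge (Suc k) {#B#}))" using realizable_rot_tuple[OF step.IH] .
  then show ?case
    by (rule realizable_cong[rotated]) (use step.hyps in \<open>auto simp: rot_tuple_def edge_def\<close>)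
qed

lemma realizable_edge:
  assumes "set_mset Q \<subseteq> Obj C" "k \<le> n - 2"
  shows "realizable (edge k Q)"
  using assms(1)
proof (induction Q)
  case empty
  then show ?case using realizable_zero unfolding edge_def by simp
next
  case (add x Q)
  have "realizable (\<lambda>i. edge k {#x#} i + edge k Q i)"
    using realizable_add[OF realizable_edge_singleton[OF _ assms(2)] add.IH] add.prems by simp
  then show ?case by (rule realizable_cong[rotated]) (simp add: edge_def)
qed

end

section \<open>Stable equivalence\<close>

lemma add_eq_add_trans:
  fixes a b c d e f g :: "'a::cancel_comm_monoid_add"
  assumes "a + b = c + d" "c + e = f + g"
  shows "a + (b + e) = f + (g + d)"
proof -
  have "a + (b + e) + c = (a + b) + (c + e)" by (simp add: ac_simps)
  also have "\<dots> = f + (g + d) + c" using assms by (simp add: ac_simps)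
  finally show ?thesis by simp
qed

context n_angulated_cat
begin

definition placed :: "nat \<Rightarrow> 'o multiset \<Rightarrow> nat \<Rightarrow> 'o multiset" where
  "placed k Q i = (if i = k then Q else {#})"

text \<open>Models equality in K_0 of the alternating sums of the entries of two tuples.\<close>

definition stably_equiv :: "(nat \<Rightarrow> 'o multiset) \<Rightarrow> (nat \<Rightarrow> 'o multiset) \<Rightarrow> bool" where
  "stably_equiv L M \<longleftrightarrow> (\<exists>R R'. realizable R \<and> realizable R' \<and>
     (\<forall>i<n. iso_classes (L i + R i) = iso_classes (M i + R' i)))"

lemma stably_equiv_cong:
  assumes "stably_equiv L M" "\<And>i. i < n \<Longrightarrow> iso_classes (L i) = iso_classes (L' i)"
    "\<And>i. i < n \<Longrightarrow> iso_classes (M i) = iso_classes (M' i)"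
  shows "stably_equiv L' M'"
  using assms unfolding stably_equiv_def by (metis image_mset_union)

lemma stably_equiv_refl: "stably_equiv L L"
  unfolding stably_equiv_def using realizable_zero by (intro exI[of _ "\<lambda>i. {#}"]) simp

lemma stably_equiv_sym: "stably_equiv L M \<Longrightarrow> stably_equiv M L"
  unfolding stably_equiv_def by metis

lemma realizable_stably_equiv_zero: "realizable R \<Longrightarrow> stably_equiv R (\<lambda>i. {#})"
  unfolding stably_equiv_def using realizable_zero by (intro exI[of _ "\<lambda>i. {#}"] exI[of _ R]) simp

lemma stably_equiv_trans [trans]:
  assumes "stably_equiv L M" "stably_equiv M K"
  shows "stably_equiv L K"
proof -
  obtain R1 R1' where r1: "realizable R1" "realizable R1'"
    "\<forall>i<n. iso_classes (L i + R1 i) = iso_classes (M i + R1' i)"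
    using assms(1) unfolding stably_equiv_def by blast
  obtain R2 R2' where r2: "realizable R2" "realizable R2'"
    "\<forall>i<n. iso_classes (M i + R2 i) = iso_classes (K i + R2' i)"
    using assms(2) unfolding stably_equiv_def by blast
  have "\<forall>i<n. iso_classes (L i + (R1 i + R2 i)) = iso_classes (K i + (R2' i + R1' i))"
    using r1(3) r2(3) by (auto intro: add_eq_add_trans)
  then show ?thesis
    unfolding stably_equiv_def using realizable_add[OF r1(1) r2(1)] realizable_add[OF r2(2) r1(2)]
    by blast
qed

lemma stably_equiv_add:
  assumes "stably_equiv L M" "stably_equiv L' M'"
  shows "stably_equiv (\<lambda>i. L i + L' i) (\<lambda>i. M i + M' i)"
proof -
  obtain R1 R1' where r1: "realizable R1" "realizable R1'"
    "\<forall>i<n. iso_classes (L i + R1 i) = iso_classes (M i + R1' i)"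
    using assms(1) unfolding stably_equiv_def by blast
  obtain R2 R2' where r2: "realizable R2" "realizable R2'"
    "\<forall>i<n. iso_classes (L' i + R2 i) = iso_classes (M' i + R2' i)"
    using assms(2) unfolding stably_equiv_def by blast
  have "\<forall>i<n. iso_classes ((L i + L' i) + (R1 i + R2 i)) = iso_classes ((M i + M' i) + (R1' i + R2' i))"
  proof (intro allI impI)
    fix i assume "i < n"
    then have "iso_classes (L i + R1 i) + iso_classes (L' i + R2 i) =
        iso_classes (M i + R1' i) + iso_classes (M' i + R2' i)"
      using r1(3) r2(3) by simp
    then show "iso_classes ((L i + L' i) + (R1 i + R2 i)) = iso_classes ((M i + M' i) + (R1' i + R2' i))"
      by (simp add: ac_simps)
  qed
  then show ?thesis
    unfolding stably_equiv_def using realizable_add[OF r1(1) r2(1)] realizable_add[OF r1(2) r2(2)]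
    by blast
qed

lemma stably_equiv_cancel:
  assumes "stably_equiv (\<lambda>i. L i + K i) (\<lambda>i. M i + K i)" "stably_equiv (\<lambda>i. K i + K' i) (\<lambda>i. {#})"
  shows "stably_equiv L M"
proof -
  have "stably_equiv (\<lambda>i. L i + {#}) (\<lambda>i. L i + (K i + K' i))"
    using stably_equiv_add[OF stably_equiv_refl stably_equiv_sym[OF assms(2)]] .
  also have "stably_equiv \<dots> (\<lambda>i. M i + (K i + K' i))"
    using stably_equiv_add[OF assms(1) stably_equiv_refl, of K']
    by (rule stably_equiv_cong) (simp_all add: ac_simps)
  also have "stably_equiv \<dots> (\<lambda>i. M i + {#})"
    using stably_equiv_add[OF stably_equiv_refl assms(2)] .
  finally show ?thesis by (rule stably_equiv_cong) simp_all
qed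

lemma stably_equiv_edge:
  assumes "set_mset Q \<subseteq> Obj C" "k \<le> n - 2"
  shows "stably_equiv (\<lambda>i. placed k Q i + placed (Suc k) Q i) (\<lambda>i. {#})"
  using realizable_stably_equiv_zero[OF realizable_edge[OF assms]]
  by (rule stably_equiv_cong) (simp_all add: edge_def placed_def)

text \<open>Moving an object along the edges of the n-angle changes its position by one and
  flips its sign.\<close>

lemma stably_equiv_shift:
  assumes B: "B \<in> Obj C" and i: "i \<le> n - 1"
  shows "(even i \<longrightarrow> stably_equiv (placed i {#B#}) (placed 0 {#B#})) \<and>
    (odd i \<longrightarrow> stably_equiv (\<lambda>j. placed i {#B#} j + placed 0 {#B#} j) (\<lambda>j. {#}))"
  using i
proof (induction i)
  case 0
  then show ?case using stably_equiv_refl by simp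
next
  case (Suc i)
  then have i: "i \<le> n - 2" "i \<le> n - 1" by auto
  have E: "stably_equiv (\<lambda>j. placed i {#B#} j + placed (Suc i) {#B#} j) (\<lambda>j. {#})"
    using stably_equiv_edge[of "{#B#}" i] B i by simp
  show ?case
  proof (cases "even i")
    case True
    then have h: "stably_equiv (placed i {#B#}) (placed 0 {#B#})" using Suc.IH i by simp
    have "stably_equiv (\<lambda>j. placed (Suc i) {#B#} j + placed 0 {#B#} j)
        (\<lambda>j. placed (Suc i) {#B#} j + placed i {#B#} j)"
      using stably_equiv_add[OF stably_equiv_refl stably_equiv_sym[OF h]] .
    also have "stably_equiv \<dots> (\<lambda>j. {#})"
      using E by (rule stably_equiv_cong) (simp_all add: ac_simps)
    finally show ?thesis using True by simp
  next
    case False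
    then have h: "stably_equiv (\<lambda>j. placed i {#B#} j + placed 0 {#B#} j) (\<lambda>j. {#})"
      using Suc.IH i by simp
    have "stably_equiv (\<lambda>j. placed (Suc i) {#B#} j + {#})
        (\<lambda>j. placed (Suc i) {#B#} j + (placed i {#B#} j + placed 0 {#B#} j))"
      using stably_equiv_add[OF stably_equiv_refl stably_equiv_sym[OF h]] .
    also have "stably_equiv \<dots> (\<lambda>j. {#} + placed 0 {#B#} j)"
      using stably_equiv_add[OF E stably_equiv_refl, of "placed 0 {#B#}"]
      by (rule stably_equiv_cong) (simp_all add: ac_simps)
    finally show ?thesis using False by (auto elim: stably_equiv_cong)
  qed
qed

end

section \<open>The Grothendieck group\<close>

lemma sum_alternating_even_length: "(\<Sum>i\<in>{m..<m + 2 * k}. (-1::int) ^ i) = 0"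
proof (induction k)
  case (Suc k)
  have "(\<Sum>i\<in>{m..<m + 2 * Suc k}. (-1::int) ^ i)
      = (\<Sum>i\<in>{m..<m + 2 * k}. (-1::int) ^ i) + (-1) ^ (m + 2 * k) + (-1) ^ Suc (m + 2 * k)"
    by (simp add: algebra_simps)
  then show ?case using Suc by simp
qed simp

lemma K0class_iff: "x \<in> K0class C n N A \<longleftrightarrow> (\<lambda>S. x S - gen C A S) \<in> Rgen C n N"
proof
  assume "x \<in> K0class C n N A"
  then have "\<exists>r. x = (\<lambda>S. gen C A S + r S) \<and> r \<in> Rgen C n N" by (simp add: K0class_def)
  then obtain r where "x = (\<lambda>S. gen C A S + r S)" "r \<in> Rgen C n N" by blast
  then show "(\<lambda>S. x S - gen C A S) \<in> Rgen C n N" by simp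
next
  assume "(\<lambda>S. x S - gen C A S) \<in> Rgen C n N"
  then show "x \<in> K0class C n N A"
    unfolding K0class_def by (simp, intro exI[of _ "\<lambda>S. x S - gen C A S"]) simp
qed

lemma Rgen_diff:
  assumes "a \<in> Rgen C n N" "b \<in> Rgen C n N"
  shows "(\<lambda>S. a S - b S) \<in> Rgen C n N"
proof -
  have "(\<lambda>S. a S + (\<lambda>S. - b S) S) \<in> Rgen C n N"
    by (rule Rgen.R_add[OF assms(1) Rgen.R_neg[OF assms(2)]])
  then show ?thesis by simp
qed

lemma K0class_eq_iff:
  "K0class C n N A = K0class C n N B \<longleftrightarrow> (\<lambda>S. gen C A S - gen C B S) \<in> Rgen C n N"
proof
  assume AB: "K0class C n N A = K0class C n N B"
  have "(\<lambda>S. gen C A S - gen C A S) \<in> Rgen C n N" using Rgen.R_zero by simp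
  then have "gen C A \<in> K0class C n N B" unfolding AB[symmetric] K0class_iff .
  then show "(\<lambda>S. gen C A S - gen C B S) \<in> Rgen C n N" unfolding K0class_iff .
next
  assume d: "(\<lambda>S. gen C A S - gen C B S) \<in> Rgen C n N"
  have iff: "(\<lambda>S. x S - gen C A S) \<in> Rgen C n N \<longleftrightarrow> (\<lambda>S. x S - gen C B S) \<in> Rgen C n N" for x
  proof
    assume "(\<lambda>S. x S - gen C A S) \<in> Rgen C n N"
    from Rgen.R_add[OF this d] show "(\<lambda>S. x S - gen C B S) \<in> Rgen C n N" by simp
  next
    assume "(\<lambda>S. x S - gen C B S) \<in> Rgen C n N"
    from Rgen_diff[OF this d] show "(\<lambda>S. x S - gen C A S) \<in> Rgen C n N" by simp
  qed
  then show "K0class C n N A = K0class C n N B" by (intro set_eqI) (simp only: K0class_iff)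
qed

context n_angulated_cat
begin

definition class_count :: "'o multiset \<Rightarrow> 'o set \<Rightarrow> int" where
  "class_count P S = int (count (iso_classes P) S)"

lemma gen_eq_class_count: "gen C x = class_count {#x#}"
  unfolding gen_def class_count_def by auto

lemma class_count_add: "class_count (P + Q) S = class_count P S + class_count Q S"
  by (simp add: class_count_def)

definition pos_terms :: "'o list \<Rightarrow> nat \<Rightarrow> 'o multiset" where
  "pos_terms As m = (\<Sum>i<m. if even i then {#As ! i#} else {#})"

definition neg_terms :: "'o list \<Rightarrow> nat \<Rightarrow> 'o multiset" where
  "neg_terms As m = (\<Sum>i<m. if odd i then {#As ! i#} else {#})"

lemma terms_Obj:
  assumes "\<And>i. i < m \<Longrightarrow> As ! i \<in> Obj C"
  shows "set_mset (pos_terms As m) \<subseteq> Obj C \<and> set_mset (neg_terms As m) \<subseteq> Obj C"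
  using assms by (induction m) (simp_all add: pos_terms_def neg_terms_def)

lemma alternating_sum_eq_class_count:
  "(\<lambda>S. \<Sum>i<m. (-1) ^ i * gen C (As ! i) S) =
    (\<lambda>S. class_count (pos_terms As m) S - class_count (neg_terms As m) S)"
proof (induction m)
  case 0
  then show ?case by (simp add: pos_terms_def neg_terms_def class_count_def)
next
  case (Suc m)
  show ?case
  proof
    fix S
    have "(\<Sum>i<Suc m. (-1) ^ i * gen C (As ! i) S) = class_count (pos_terms As m) S
        - class_count (neg_terms As m) S + (-1) ^ m * class_count {#As ! m#} S"
      using fun_cong[OF Suc.IH, of S] by (simp add: gen_eq_class_count)
    also have "\<dots> = class_count (pos_terms As (Suc m)) S - class_count (neg_terms As (Suc m)) S"
      by (cases "even m") (simp_all add: pos_terms_def neg_terms_def class_count_def)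
    finally show "(\<Sum>i<Suc m. (-1) ^ i * gen C (As ! i) S) =
        class_count (pos_terms As (Suc m)) S - class_count (neg_terms As (Suc m)) S" .
  qed
qed

definition terms_tuple :: "'o list \<Rightarrow> nat \<Rightarrow> nat \<Rightarrow> 'o multiset" where
  "terms_tuple As m j = (\<Sum>i<m. placed i {#As ! i#} j)"

lemma stably_equiv_terms_tuple:
  assumes As: "\<And>i. i < n \<Longrightarrow> As ! i \<in> Obj C" and m: "m \<le> n"
  shows "stably_equiv (\<lambda>j. terms_tuple As m j + placed 0 (neg_terms As m) j)
    (placed 0 (pos_terms As m))"
  using m
proof (induction m)
  case 0
  show ?case
    using stably_equiv_refl by (rule stably_equiv_cong)
      (simp_all add: terms_tuple_def pos_terms_def neg_terms_def placed_def)
next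
  case (Suc m)
  then have a: "As ! m \<in> Obj C" and m: "m \<le> n - 1" using As by auto
  note shift = stably_equiv_shift[OF a m] and IH = Suc.IH[OF Suc_leD[OF Suc.prems]]
  show ?case
  proof (cases "even m")
    case True
    have "stably_equiv (\<lambda>j. (terms_tuple As m j + placed 0 (neg_terms As m) j) + placed m {#As ! m#} j)
        (\<lambda>j. placed 0 (pos_terms As m) j + placed 0 {#As ! m#} j)"
      using stably_equiv_add[OF IH] shift True by simp
    then show ?thesis
      by (rule stably_equiv_cong)
        (simp_all add: terms_tuple_def pos_terms_def neg_terms_def placed_def True ac_simps)
  next
    case False
    have "stably_equiv (\<lambda>j. placed m {#As ! m#} j + placed 0 {#As ! m#} j) (\<lambda>j. {#})"
      using shift False by simp
    from stably_equiv_add[OF IH this] show ?thesis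
      by (rule stably_equiv_cong)
        (simp_all add: terms_tuple_def pos_terms_def neg_terms_def placed_def False ac_simps)
  qed
qed

lemma angle_realizable:
  assumes X: "(As, fs) \<in> N"
  shows "realizable (terms_tuple As n)"
proof (rule realizableI[OF X])
  fix i assume i: "i < n"
  then have t: "terms_tuple As n i = {#As ! i#}"
    unfolding terms_tuple_def placed_def by (simp add: sum.delta')
  then show "set_mset (terms_tuple As n i) \<subseteq> Obj C" using angle_Obj[OF X i] by simp
  show "\<exists>xs. mset xs = terms_tuple As n i \<and> iso_obj C (As ! i) (bigsum xs)"
    using t iso_obj_sym[OF bigsum_singleton[OF angle_Obj[OF X i]]]
    by (intro exI[of _ "[As ! i]"]) simp
qed

lemma angle_stably_equiv:
  assumes X: "(As, fs) \<in> N"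
  shows "stably_equiv (placed 0 (pos_terms As n)) (placed 0 (neg_terms As n))"
proof -
  have "stably_equiv (\<lambda>j. {#} + placed 0 (neg_terms As n) j)
      (\<lambda>j. terms_tuple As n j + placed 0 (neg_terms As n) j)"
    using stably_equiv_add[OF stably_equiv_sym[OF realizable_stably_equiv_zero[OF angle_realizable[OF X]]]
      stably_equiv_refl] .
  also have "stably_equiv \<dots> (placed 0 (pos_terms As n))"
    using stably_equiv_terms_tuple[OF angle_Obj[OF X]] by simp
  finally show ?thesis by (rule stably_equiv_sym[OF stably_equiv_cong]) simp_all
qed

end

section \<open>Odd n\<close>

lemma chi_Cons:
  assumes "0 < n"
  shows "chi C n (x # Cs) S = gen C x S - (\<Sum>i<n - 1. (-1) ^ i * gen C (Cs ! i) S)"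
proof -
  obtain m where n: "n = Suc m" using assms by (cases n) auto
  have "chi C n (x # Cs) S = gen C x S + (\<Sum>i<m. (-1) ^ Suc i * gen C (Cs ! i) S)"
    unfolding chi_def n by (subst sum.lessThan_Suc_shift) simp
  then show ?thesis unfolding n by (simp add: sum_negf)
qed

lemma chi_trailing_pairs:
  assumes "odd n" "3 \<le> n" and Z: "\<And>i. 3 \<le> i \<Longrightarrow> i < n \<Longrightarrow> gen C (As ! i) = gen C Z"
  shows "chi C n As S = gen C (As ! 0) S - gen C (As ! 1) S + gen C (As ! 2) S"
proof -
  obtain k where k: "n = 3 + 2 * k" using assms(1,2)
    by (metis add.commute dvd_def le_add_diff_inverse odd_add odd_numeral)
  have "chi C n As S = (\<Sum>i<3. (-1) ^ i * gen C (As ! i) S)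
      + (\<Sum>i\<in>{3..<3 + 2 * k}. (-1) ^ i * gen C (As ! i) S)"
    unfolding chi_def k
    using sum.atLeastLessThan_concat[of 0 3 "3 + 2 * k" "\<lambda>i. (-1) ^ i * gen C (As ! i) S"]
    by (simp add: atLeast0LessThan)
  also have "(\<Sum>i\<in>{3..<3 + 2 * k}. (-1) ^ i * gen C (As ! i) S)
      = gen C Z S * (\<Sum>i\<in>{3..<3 + 2 * k}. (-1::int) ^ i)"
    using Z k by (simp add: sum_distrib_left mult.commute)
  finally show ?thesis
    by (simp add: sum_alternating_even_length[of 3 k, simplified] lessThan_nat_numeral)
qed

locale odd_n_angulated_cat = n_angulated_cat +
  assumes odd_n: "odd n"
begin

text \<open>The generator \<langle>0\<rangle>, present only for even n, is the case excluded by oddness.\<close>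

lemma Rgen_stably_equiv:
  assumes "r \<in> Rgen C n N"
  shows "\<exists>P Q. set_mset P \<subseteq> Obj C \<and> set_mset Q \<subseteq> Obj C \<and>
    r = (\<lambda>S. class_count P S - class_count Q S) \<and> stably_equiv (placed 0 P) (placed 0 Q)"
  using assms
proof (induction rule: Rgen.induct)
  case R_zero
  show ?case using stably_equiv_refl by (intro exI[of _ "{#}"]) (simp add: class_count_def)
next
  case (R_chi As fs)
  have "chi C n As = (\<lambda>S. class_count (pos_terms As n) S - class_count (neg_terms As n) S)"
    unfolding chi_def by (rule alternating_sum_eq_class_count)
  then show ?case using terms_Obj[OF angle_Obj[OF R_chi]] angle_stably_equiv[OF R_chi]
    by (intro exI[of _ "pos_terms As n"] exI[of _ "neg_terms As n"]) simp
next
  case (R_zobj Z)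
  then show ?case using odd_n by simp
next
  case (R_add x y)
  then obtain P1 Q1 P2 Q2 where h: "set_mset P1 \<subseteq> Obj C" "set_mset Q1 \<subseteq> Obj C"
    "x = (\<lambda>S. class_count P1 S - class_count Q1 S)" "stably_equiv (placed 0 P1) (placed 0 Q1)"
    "set_mset P2 \<subseteq> Obj C" "set_mset Q2 \<subseteq> Obj C"
    "y = (\<lambda>S. class_count P2 S - class_count Q2 S)" "stably_equiv (placed 0 P2) (placed 0 Q2)"
    by (elim exE conjE)
  have "stably_equiv (placed 0 (P1 + P2)) (placed 0 (Q1 + Q2))"
    using stably_equiv_add[OF h(4) h(8)] by (rule stably_equiv_cong) (simp_all add: placed_def)
  moreover have "(\<lambda>S. x S + y S) = (\<lambda>S. class_count (P1 + P2) S - class_count (Q1 + Q2) S)"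
    using h(3,7) by (simp add: class_count_add algebra_simps)
  ultimately show ?case
    using h(1,2,5,6) by (intro exI[of _ "P1 + P2"] exI[of _ "Q1 + Q2"]) simp
next
  case (R_neg x)
  then obtain P Q where h: "set_mset P \<subseteq> Obj C" "set_mset Q \<subseteq> Obj C"
    "x = (\<lambda>S. class_count P S - class_count Q S)" "stably_equiv (placed 0 P) (placed 0 Q)"
    by (elim exE conjE)
  then show ?case using stably_equiv_sym[OF h(4)] by (intro exI[of _ Q] exI[of _ P]) simp
qed

lemma stably_equiv_of_K0class_eq:
  assumes AB: "K0class C n N A = K0class C n N B"
  shows "stably_equiv (placed 0 {#A#}) (placed 0 {#B#})"
proof -
  obtain P Q where PQ: "set_mset Q \<subseteq> Obj C"
    "(\<lambda>S. gen C A S - gen C B S) = (\<lambda>S. class_count P S - class_count Q S)"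
    "stably_equiv (placed 0 P) (placed 0 Q)"
    using Rgen_stably_equiv[OF AB[unfolded K0class_eq_iff]] by (elim exE conjE) simp
  have classes: "iso_classes ({#B#} + P) = iso_classes ({#A#} + Q)"
  proof (rule multiset_eqI)
    fix S
    have "class_count {#B#} S + class_count P S = class_count {#A#} S + class_count Q S"
      using fun_cong[OF PQ(2), of S] by (simp add: gen_eq_class_count)
    then have "class_count ({#B#} + P) S = class_count ({#A#} + Q) S"
      by (simp only: class_count_add)
    then show "count (iso_classes ({#B#} + P)) S = count (iso_classes ({#A#} + Q)) S"
      unfolding class_count_def by simp
  qed
  have "stably_equiv (\<lambda>i. placed 0 {#A#} i + placed 0 Q i) (\<lambda>i. placed 0 {#B#} i + placed 0 Q i)"
    using stably_equiv_add[OF stably_equiv_refl PQ(3), of "placed 0 {#B#}"]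
    by (rule stably_equiv_cong) (use classes in \<open>simp_all add: placed_def\<close>)
  moreover have "stably_equiv (\<lambda>i. placed 0 Q i + placed (Suc 0) Q i) (\<lambda>i. {#})"
    using stably_equiv_edge[OF PQ(1), of 0] by simp
  ultimately show ?thesis by (rule stably_equiv_cancel)
qed

lemma stably_equiv_placed_0:
  assumes "stably_equiv (placed 0 {#A#}) (placed 0 {#B#})"
  shows "\<exists>R R'. realizable R \<and> realizable R' \<and>
    iso_classes ({#A#} + R 0) = iso_classes ({#B#} + R' 0) \<and>
    (\<forall>i. 0 < i \<longrightarrow> i < n \<longrightarrow> iso_classes (R i) = iso_classes (R' i))"
proof -
  obtain R R' where RR: "realizable R" "realizable R'"
    and eq: "\<forall>i<n. iso_classes (placed 0 {#A#} i + R i) = iso_classes (placed 0 {#B#} i + R' i)"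
    using assms unfolding stably_equiv_def by blast
  have "iso_classes ({#A#} + R 0) = iso_classes ({#B#} + R' 0)"
    using eq[rule_format, OF n_pos] unfolding placed_def by simp
  moreover have "iso_classes (R i) = iso_classes (R' i)" if "0 < i" "i < n" for i
    using eq[rule_format, OF that(2)] that(1) unfolding placed_def by simp
  ultimately show ?thesis using RR by blast
qed

lemma angles_of_iso_terms:
  assumes X: "(Os, fs) \<in> N" and Y: "(Os', fs') \<in> N"
    and A: "A \<in> Obj C" and B: "B \<in> Obj C" and C1: "C1 \<in> Obj C"
    and D0: "iso_obj C (Os ! 0) (fst (biprod_of A C1))"
    and E0: "iso_obj C (Os' ! 0) (fst (biprod_of B C1))"
    and I: "\<And>i. 0 < i \<Longrightarrow> i < n \<Longrightarrow> iso_obj C (Os' ! i) (Os ! i)"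
  shows "\<exists>C1 Cs D E fs gs. C1 \<in> Obj C \<and> length Cs = n - 1 \<and> set Cs \<subseteq> Obj C \<and>
    is_biprod C A C1 D \<and> is_biprod C B C1 E \<and> (fst D # Cs, fs) \<in> N \<and> (fst E # Cs, gs) \<in> N"
proof -
  have len: "length Os = n" using angle_length[OF X] .
  obtain fs' where "(fst (biprod_of A C1) # tl Os, fs') \<in> N"
    using angle_iso_transport_Cons[OF X len D0] iso_obj_refl angle_Obj[OF X] by blast
  moreover obtain gs where "(fst (biprod_of B C1) # tl Os, gs) \<in> N"
    using angle_iso_transport_Cons[OF Y len E0 I] by blast
  moreover have "set (tl Os) \<subseteq> Obj C" "length (tl Os) = n - 1"
    using angle_Obj[OF X] len by (auto simp: in_set_conv_nth nth_tl)
  ultimately show ?thesis using biprod_of A B C1 by blast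
qed

text \<open>Add the edge A, B at positions 0, 1 to both realizable tuples: the realizing n-angles
  have A \<oplus> (B \<oplus> R'_0) and B \<oplus> (B \<oplus> R'_0) at position 0 and isomorphic terms elsewhere.\<close>

lemma angles_of_stably_equiv:
  assumes A: "A \<in> Obj C" and B: "B \<in> Obj C"
    and AB: "stably_equiv (placed 0 {#A#}) (placed 0 {#B#})"
  shows "\<exists>C1 Cs D E fs gs. C1 \<in> Obj C \<and> length Cs = n - 1 \<and> set Cs \<subseteq> Obj C \<and>
    is_biprod C A C1 D \<and> is_biprod C B C1 E \<and> (fst D # Cs, fs) \<in> N \<and> (fst E # Cs, gs) \<in> N"
proof -
  obtain R R' where RR: "realizable R" "realizable R'"
    and eq0: "iso_classes ({#A#} + R 0) = iso_classes ({#B#} + R' 0)"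
    and eq: "\<forall>i. 0 < i \<longrightarrow> i < n \<longrightarrow> iso_classes (R i) = iso_classes (R' i)"
    using stably_equiv_placed_0[OF AB] by blast
  define T where "T = edge 0 {#A, B#}"
  have T: "realizable T" and T0: "T 0 = {#A, B#}"
    using realizable_edge[of "{#A, B#}" 0] A B unfolding T_def edge_def by simp_all
  obtain Os fs where X: "(Os, fs) \<in> N" and XO: "\<forall>i<n. set_mset (R' i + T i) \<subseteq> Obj C"
    and Xiso: "\<forall>i xs. i < n \<longrightarrow> iso_classes (mset xs) = iso_classes (R' i + T i) \<longrightarrow>
      set xs \<subseteq> Obj C \<longrightarrow> iso_obj C (Os ! i) (bigsum xs)"
    using realizable_angle[OF realizable_add[OF RR(2) T]] by blast
  obtain Os' fs' where Y: "(Os', fs') \<in> N"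
    and Yiso: "\<forall>i xs. i < n \<longrightarrow> iso_classes (mset xs) = iso_classes (R i + T i) \<longrightarrow>
      set xs \<subseteq> Obj C \<longrightarrow> iso_obj C (Os' ! i) (bigsum xs)"
    using realizable_angle[OF realizable_add[OF RR(1) T]] by blast
  obtain w where w: "mset w = R' 0" by (metis ex_mset)
  have w_Obj: "set w \<subseteq> Obj C"
    using XO[rule_format, OF n_pos] w by (metis le_sup_iff set_mset_mset set_mset_union)
  define C1 where "C1 = bigsum (B # w)"
  have C1: "C1 \<in> Obj C" using bigsum_Obj[of "B # w"] w_Obj B unfolding C1_def by simp
  have BBw: "iso_classes (mset (B # B # w)) = iso_classes (R 0 + T 0)"
    using eq0 w T0 by (simp add: ac_simps)
  have "iso_obj C (Os ! 0) (fst (biprod_of A C1))"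
    using Xiso[rule_format, OF n_pos, of "A # B # w"] w w_Obj A B T0 unfolding C1_def by simp
  moreover have "iso_obj C (Os' ! 0) (fst (biprod_of B C1))"
    using Yiso[rule_format, OF n_pos, of "B # B # w"] BBw w_Obj B unfolding C1_def by simp
  moreover have "iso_obj C (Os' ! i) (Os ! i)" if i: "0 < i" "i < n" for i
  proof -
    obtain xs where xs: "mset xs = R' i + T i" by (metis ex_mset)
    have xs_Obj: "set xs \<subseteq> Obj C" using XO[rule_format, OF i(2)] xs by (metis set_mset_mset)
    have "iso_obj C (Os' ! i) (bigsum xs)"
      using Yiso[rule_format, OF i(2) _ xs_Obj] xs eq[rule_format, OF i] by simp
    moreover have "iso_obj C (Os ! i) (bigsum xs)"
      using Xiso[rule_format, OF i(2) _ xs_Obj] xs by simp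
    ultimately show ?thesis using iso_obj_sym iso_obj_trans by blast
  qed
  ultimately show ?thesis using angles_of_iso_terms[OF X Y A B C1] by blast
qed

text \<open>The n-angle X \<rightarrow> X \<oplus> Y \<rightarrow> Y \<rightarrow> 0 \<rightarrow> \<dots> \<rightarrow> 0 is the sum of the edges X at positions 0, 1
  and Y at positions 1, 2.\<close>

lemma biprod_Rgen:
  assumes X: "X \<in> Obj C" and Y: "Y \<in> Obj C" and D: "is_biprod C X Y D"
  shows "(\<lambda>S. gen C X S - gen C (fst D) S + gen C Y S) \<in> Rgen C n N"
proof -
  define V where "V i = edge 0 {#X#} i + edge 1 {#Y#} i" for i
  have "realizable V"
    using realizable_add[OF realizable_edge[of "{#X#}" 0] realizable_edge[of "{#Y#}" 1]] X Y n_ge_3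
    unfolding V_def by simp
  then obtain Os fs where O: "(Os, fs) \<in> N"
    and iso: "\<forall>i xs. i < n \<longrightarrow> iso_classes (mset xs) = iso_classes (V i) \<longrightarrow> set xs \<subseteq> Obj C \<longrightarrow>
      iso_obj C (Os ! i) (bigsum xs)"
    using realizable_angle by blast
  have n: "0 < n" "1 < n" "2 < n" using n_ge_3 by auto
  have g0: "gen C (Os ! 0) = gen C X"
    using iso[rule_format, OF n(1), of "[X]"] bigsum_singleton[OF X] X
    by (simp add: V_def edge_def gen_iso[OF iso_obj_trans])
  have g2: "gen C (Os ! 2) = gen C Y"
    using iso[rule_format, OF n(3), of "[Y]"] bigsum_singleton[OF Y] Y
    by (simp add: V_def edge_def gen_iso[OF iso_obj_trans])
  have "iso_obj C (bigsum [X, Y]) (fst D)"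
    using biprod_iso_cong[OF biprod_of D iso_obj_refl[OF X] bigsum_singleton[OF Y]]
      X Y bigsum_Obj[of "[Y]"] by simp
  then have g1: "gen C (Os ! 1) = gen C (fst D)"
    using iso[rule_format, OF n(2), of "[X, Y]"] X Y
    by (simp add: V_def edge_def gen_iso[OF iso_obj_trans])
  have g3: "gen C (Os ! i) = gen C zero_obj" if "3 \<le> i" "i < n" for i
    using iso[rule_format, OF that(2), of "[]"] that by (simp add: V_def edge_def gen_iso)
  have "chi C n Os = (\<lambda>S. gen C X S - gen C (fst D) S + gen C Y S)"
    using chi_trailing_pairs[OF odd_n n_ge_3 g3] g0 g1 g2 by auto
  then show ?thesis using Rgen.R_chi[where C = C and n = n, OF O] by simp
qed

lemma K0class_eq_of_angles:
  assumes A: "A \<in> Obj C" and B: "B \<in> Obj C" and C1: "C1 \<in> Obj C"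
    and D: "is_biprod C A C1 D" and E: "is_biprod C B C1 E"
    and XD: "(fst D # Cs, fs) \<in> N" and XE: "(fst E # Cs, gs) \<in> N"
  shows "K0class C n N A = K0class C n N B"
proof -
  have "(\<lambda>S. (gen C A S - gen C (fst D) S + gen C C1 S) - (gen C B S - gen C (fst E) S + gen C C1 S)
      + (chi C n (fst D # Cs) S - chi C n (fst E # Cs) S)) \<in> Rgen C n N"
    using Rgen.R_add[OF Rgen_diff[OF biprod_Rgen[OF A C1 D] biprod_Rgen[OF B C1 E]]
      Rgen_diff[OF Rgen.R_chi[OF XD] Rgen.R_chi[OF XE]]] .
  then have "(\<lambda>S. gen C A S - gen C B S) \<in> Rgen C n N"
    by (simp add: chi_Cons[OF n_pos])
  then show ?thesis by (simp add: K0class_eq_iff)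
qed

end

theorem corollary2p4:
  fixes C :: "('o,'m) addcat" and SO :: "'o \<Rightarrow> 'o" and SM :: "'m \<Rightarrow> 'm"
    and n :: nat and N :: "('o list \<times> 'm list) set" and A B :: 'o
  assumes "3 \<le> n" and "odd n" and "n_angulated C SO SM n N"
    and "A \<in> Obj C" and "B \<in> Obj C"
  shows "K0class C n N A = K0class C n N B \<longleftrightarrow>
    (\<exists>C1 Cs D E fs gs. C1 \<in> Obj C \<and> length Cs = n - 1 \<and> set Cs \<subseteq> Obj C \<and>
       is_biprod C A C1 D \<and> is_biprod C B C1 E \<and>
       (fst D # Cs, fs) \<in> N \<and> (fst E # Cs, gs) \<in> N)"
proof -
  \<comment> \<open>The hypothesis 3 \<le> n is also part of n_angulated.\<close>
  have "additive_category C" using assms(3) unfolding n_angulated_def by (elim conjE)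
  then interpret odd_n_angulated_cat C SO SM n N
    using assms(2,3) by unfold_locales
  show ?thesis
    using angles_of_stably_equiv[OF assms(4,5) stably_equiv_of_K0class_eq]
      K0class_eq_of_angles[OF assms(4,5)] by blast
qed

end
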